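(* Let $M_t$ be a smooth spacelike $n$-dimensional mean curvature flow in $\mathbb{R}^{n,m}$, parametrised by $\partial_tX=H$, and for $A\in\{1,\dots,m\}$ let $w_A^2=\|e_A^\perp\|^2$ and $u_A=-\langle e_A,X\rangle$. Then $$\Big(\frac{d}{dt}-\Delta\Big)\big(w_A^2e^{u_A^2}\big)\le-2e^{u_A^2}w_A^2(w_A^2-1).$$
   Context: $\mathbb{R}^{n,m}$ is $\mathbb{R}^{n+m}$ with $\langle x,y\rangle=\sum_{i\le n}x^iy^i-\sum_{A\le m}x^{n+A}y^{n+A}$ and standard timelike orthonormal vectors $e_1,\dots,e_m$. $X$ is the position vector; $e_A^\perp$ is the normal projection of $e_A$; $\|z\|^2=-\langle z,z\rangle$ for normal $z$. $H$ is the mean curvature vector, $\Delta$ the Laplace–Beltrami operator of $M_t$. *)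

theory Defs
  imports "HOL-Analysis.Analysis"
begin

text \<open>Ambient space R^{n,m} realised as real^'n \<times> real^'m: first factor spacelike,
second factor timelike.  Parameter space of the flow: time \<times> local coordinates in real^'n.\<close>

type_synonym ('n, 'm) amb = "(real^'n) \<times> (real^'m)"
type_synonym 'n par = "real \<times> (real^'n)"

definition mink :: "('n::finite, 'm::finite) amb \<Rightarrow> ('n, 'm) amb \<Rightarrow> real" where
  "mink x y = fst x \<bullet> fst y - snd x \<bullet> snd y"

definition eA :: "'m::finite \<Rightarrow> ('n::finite, 'm) amb" where
  "eA A = (0, axis A 1)"

definition pd :: "('a::real_normed_vector \<Rightarrow> 'b::real_normed_vector) \<Rightarrow> 'a \<Rightarrow> 'a \<Rightarrow> 'b" where
  "pd f v x = vector_derivative (\<lambda>s. f (x + s *\<^sub>R v)) (at 0)"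

fun iterpd :: "('a::real_normed_vector \<Rightarrow> 'b::real_normed_vector) \<Rightarrow> 'a list \<Rightarrow> 'a \<Rightarrow> 'b" where
  "iterpd f [] = f"
| "iterpd f (v # vs) = pd (iterpd f vs) v"

definition smooth_on :: "'a::euclidean_space set \<Rightarrow> ('a \<Rightarrow> 'b::real_normed_vector) \<Rightarrow> bool" where
  "smooth_on S f \<longleftrightarrow> open S \<and>
     (\<forall>vs. continuous_on S (iterpd f vs) \<and>
        (\<forall>x\<in>S. \<forall>v. (\<lambda>s. iterpd f vs (x + s *\<^sub>R v)) differentiable (at 0)))"

definition dirx :: "'n::finite \<Rightarrow> 'n par" where
  "dirx i = (0, axis i 1)"

definition dirt :: "'n::finite par" where
  "dirt = (1, 0)"

definition dX :: "('n::finite par \<Rightarrow> ('n, 'm::finite) amb) \<Rightarrow> 'n \<Rightarrow> 'n par \<Rightarrow> ('n, 'm) amb" where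
  "dX X i z = pd X (dirx i) z"

definition ddX :: "('n::finite par \<Rightarrow> ('n, 'm::finite) amb) \<Rightarrow> 'n \<Rightarrow> 'n \<Rightarrow> 'n par \<Rightarrow> ('n, 'm) amb" where
  "ddX X i j z = pd (dX X j) (dirx i) z"

definition gmat :: "('n::finite par \<Rightarrow> ('n, 'm::finite) amb) \<Rightarrow> 'n par \<Rightarrow> real^'n^'n" where
  "gmat X z = (\<chi> i j. mink (dX X i z) (dX X j z))"

definition ginv :: "('n::finite par \<Rightarrow> ('n, 'm::finite) amb) \<Rightarrow> 'n par \<Rightarrow> real^'n^'n" where
  "ginv X z = matrix_inv (gmat X z)"

definition spacelike_at :: "('n::finite par \<Rightarrow> ('n, 'm::finite) amb) \<Rightarrow> 'n par \<Rightarrow> bool" where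
  "spacelike_at X z \<longleftrightarrow> (\<forall>v::real^'n. v \<noteq> 0 \<longrightarrow>
     mink (\<Sum>i\<in>UNIV. v$i *\<^sub>R dX X i z) (\<Sum>i\<in>UNIV. v$i *\<^sub>R dX X i z) > 0)"

definition tproj :: "('n::finite par \<Rightarrow> ('n, 'm::finite) amb) \<Rightarrow> 'n par \<Rightarrow> ('n, 'm) amb \<Rightarrow> ('n, 'm) amb" where
  "tproj X z v = (\<Sum>i\<in>UNIV. \<Sum>j\<in>UNIV. (ginv X z $ i $ j * mink v (dX X j z)) *\<^sub>R dX X i z)"

definition nproj :: "('n::finite par \<Rightarrow> ('n, 'm::finite) amb) \<Rightarrow> 'n par \<Rightarrow> ('n, 'm) amb \<Rightarrow> ('n, 'm) amb" where
  "nproj X z v = v - tproj X z v"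

definition mcv :: "('n::finite par \<Rightarrow> ('n, 'm::finite) amb) \<Rightarrow> 'n par \<Rightarrow> ('n, 'm) amb" where
  "mcv X z = (\<Sum>i\<in>UNIV. \<Sum>j\<in>UNIV. ginv X z $ i $ j *\<^sub>R nproj X z (ddX X i j z))"

definition christoffel :: "('n::finite par \<Rightarrow> ('n, 'm::finite) amb) \<Rightarrow> 'n \<Rightarrow> 'n \<Rightarrow> 'n \<Rightarrow> 'n par \<Rightarrow> real" where
  "christoffel X k i j z = (1/2) * (\<Sum>l\<in>UNIV. ginv X z $ k $ l *
      (pd (\<lambda>y. gmat X y $ j $ l) (dirx i) z + pd (\<lambda>y. gmat X y $ i $ l) (dirx j) z
       - pd (\<lambda>y. gmat X y $ i $ j) (dirx l) z))"

definition lapl :: "('n::finite par \<Rightarrow> ('n, 'm::finite) amb) \<Rightarrow> ('n par \<Rightarrow> real) \<Rightarrow> 'n par \<Rightarrow> real" where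
  "lapl X f z = (\<Sum>i\<in>UNIV. \<Sum>j\<in>UNIV. ginv X z $ i $ j *
      (pd (pd f (dirx j)) (dirx i) z - (\<Sum>k\<in>UNIV. christoffel X k i j z * pd f (dirx k) z)))"

definition ddt :: "('n::finite par \<Rightarrow> 'b::real_normed_vector) \<Rightarrow> 'n par \<Rightarrow> 'b" where
  "ddt f z = pd f dirt z"

text \<open>w_A^2 = \<parallel>e_A^\<perp>\<parallel>^2 = -<e_A^\<perp>, e_A^\<perp>> and u_A = -<e_A, X>.\<close>
definition wsq :: "('n::finite par \<Rightarrow> ('n, 'm::finite) amb) \<Rightarrow> 'm \<Rightarrow> 'n par \<Rightarrow> real" where
  "wsq X A z = - mink (nproj X z (eA A)) (nproj X z (eA A))"

definition uA :: "('n::finite par \<Rightarrow> ('n, 'm::finite) amb) \<Rightarrow> 'm \<Rightarrow> 'n par \<Rightarrow> real" where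
  "uA X A z = - mink (eA A) (X z)"

end

theory Submission
  imports Defs
begin

(*
  At a point z, w_A^2 = -<e_A^perp, e_A^perp> is touched from below by phi = -<e_A + V, e_A + V>,
  where V is a tangent field with coefficients affine in the space coordinates and V(z) = -e_A^T:
  adding a spacelike tangent vector to the normal vector e_A^perp can only decrease its squared
  timelike length. Hence at z the heat operator of w_A^2 e^(u_A^2) is at most that of
  phi e^(u_A^2). Along the flow u_A solves the heat equation, so the latter is explicit:
  e^(u^2) (2 Q - 2 |B|^2 - 2 w^2 (1 + 2 u^2) |e^T|^2 + 8 u B(xi, xi)), where B is the second
  fundamental form in the direction e_A^perp, xi the coordinates of -e_A^T, and Q <= 0 is a trace of
  Minkowski products of normal vectors, which are timelike. Cauchy-Schwarz, in an orthonormal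
  tangent frame and in its reversed form for normal vectors, absorbs the cross term 8 u B(xi, xi)
  and leaves -2 e^(u^2) w^2 |e^T|^2 = -2 e^(u^2) w^2 (w^2 - 1).
*)

section \<open>Directional derivatives\<close>

definition has_dir_deriv :: "('a::real_normed_vector \<Rightarrow> 'b::real_normed_vector) \<Rightarrow> 'a \<Rightarrow> 'a \<Rightarrow> 'b \<Rightarrow>
  bool" where
  "has_dir_deriv f v x d \<longleftrightarrow> ((\<lambda>s. f (x + s *\<^sub>R v)) has_vector_derivative d) (at 0)"

definition dir_differentiable :: "('a::real_normed_vector \<Rightarrow> 'b::real_normed_vector) \<Rightarrow> 'a \<Rightarrow> 'a \<Rightarrow>
  bool" where
  "dir_differentiable f v x \<longleftrightarrow> (\<lambda>s. f (x + s *\<^sub>R v)) differentiable (at (0::real))"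

lemma pd_works: "dir_differentiable f v x \<Longrightarrow> has_dir_deriv f v x (pd f v x)"
  by (simp add: dir_differentiable_def has_dir_deriv_def pd_def vector_derivative_works)

lemma pd_eqI: "has_dir_deriv f v x d \<Longrightarrow> pd f v x = d"
  by (simp add: has_dir_deriv_def pd_def vector_derivative_at)

lemma dir_differentiableI: "has_dir_deriv f v x d \<Longrightarrow> dir_differentiable f v x"
  unfolding has_dir_deriv_def dir_differentiable_def using differentiableI_vector by blast

lemma has_dir_deriv_eq_rhs: "has_dir_deriv f v x d \<Longrightarrow> d = d' \<Longrightarrow> has_dir_deriv f v x d'"
  by simp

lemma has_dir_deriv_real_iff:
  "has_dir_deriv (f::'a::real_normed_vector \<Rightarrow> real) v x d \<longleftrightarrow> ((\<lambda>s. f (x + s *\<^sub>R v))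
      has_real_derivative d) (at 0)"
  by (simp add: has_dir_deriv_def has_real_derivative_iff_has_vector_derivative)

lemma has_dir_deriv_const: "has_dir_deriv (\<lambda>y. c) v x 0"
  unfolding has_dir_deriv_def by (rule has_vector_derivative_const)

lemma has_dir_deriv_ident: "has_dir_deriv (\<lambda>y. y) v x v"
  unfolding has_dir_deriv_def by (auto intro!: derivative_eq_intros simp: has_vector_derivative_def)

lemma has_dir_deriv_add:
  "has_dir_deriv f v x a \<Longrightarrow> has_dir_deriv g v x b \<Longrightarrow> has_dir_deriv (\<lambda>y. f y + g y) v x (a + b)"
  unfolding has_dir_deriv_def by (rule has_vector_derivative_add)

lemma has_dir_deriv_diff:
  "has_dir_deriv f v x a \<Longrightarrow> has_dir_deriv g v x b \<Longrightarrow> has_dir_deriv (\<lambda>y. f y - g y) v x (a - b)"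
  unfolding has_dir_deriv_def by (rule has_vector_derivative_diff)

lemma has_dir_deriv_minus: "has_dir_deriv f v x a \<Longrightarrow> has_dir_deriv (\<lambda>y. - f y) v x (- a)"
  unfolding has_dir_deriv_def by (rule has_vector_derivative_minus)

lemma has_dir_deriv_mult:
  "has_dir_deriv (f::_ \<Rightarrow> real) v x a \<Longrightarrow> has_dir_deriv g v x b \<Longrightarrow>
    has_dir_deriv (\<lambda>y. f y * g y) v x (a * g x + f x * b)"
  unfolding has_dir_deriv_def
  using has_vector_derivative_mult[of "\<lambda>s. f (x + s *\<^sub>R v)" a 0 UNIV "\<lambda>s. g (x + s *\<^sub>R v)" b]
  by (simp add: mult.commute add.commute)

lemma has_dir_deriv_scaleR:
  "has_dir_deriv (f::_ \<Rightarrow> real) v x a \<Longrightarrow> has_dir_deriv g v x b \<Longrightarrow>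
    has_dir_deriv (\<lambda>y. f y *\<^sub>R g y) v x (a *\<^sub>R g x + f x *\<^sub>R b)"
  unfolding has_dir_deriv_def
  using has_vector_derivative_scaleR[of "\<lambda>s. f (x + s *\<^sub>R v)" a 0 UNIV "\<lambda>s. g (x + s *\<^sub>R v)" b]
  by (simp add: add.commute has_real_derivative_iff_has_vector_derivative)

lemma has_dir_deriv_linear:
  "bounded_linear l \<Longrightarrow> has_dir_deriv f v x a \<Longrightarrow> has_dir_deriv (\<lambda>y. l (f y)) v x (l a)"
  unfolding has_dir_deriv_def by (rule bounded_linear.has_vector_derivative)

lemma has_dir_deriv_sum:
  "finite K \<Longrightarrow> (\<And>k. k \<in> K \<Longrightarrow> has_dir_deriv (f k) v x (a k)) \<Longrightarrow>
    has_dir_deriv (\<lambda>y. \<Sum>k\<in>K. f k y) v x (\<Sum>k\<in>K. a k)"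
  unfolding has_dir_deriv_def by (rule has_vector_derivative_sum)

lemma has_dir_deriv_exp:
  "has_dir_deriv (f::_ \<Rightarrow> real) v x a \<Longrightarrow> has_dir_deriv (\<lambda>y. exp (f y)) v x (exp (f x) * a)"
  unfolding has_dir_deriv_real_iff by (auto intro!: derivative_eq_intros)

lemma has_dir_deriv_inverse:
  "has_dir_deriv f v x a \<Longrightarrow> f x \<noteq> (0::real) \<Longrightarrow>
    has_dir_deriv (\<lambda>y. inverse (f y)) v x (- (inverse (f x) * inverse (f x)) * a)"
  unfolding has_dir_deriv_real_iff by (auto intro!: derivative_eq_intros)

lemma has_dir_deriv_power2:
  "has_dir_deriv (f::_ \<Rightarrow> real) v x a \<Longrightarrow> has_dir_deriv (\<lambda>y. (f y)\<^sup>2) v x (2 * f x * a)"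
  using has_dir_deriv_mult[of f v x a f a] by (simp add: power2_eq_square algebra_simps)

lemma has_dir_deriv_fst: "has_dir_deriv f v x a \<Longrightarrow> has_dir_deriv (\<lambda>y. fst (f y)) v x (fst a)"
  by (rule has_dir_deriv_linear[OF bounded_linear_fst])

lemma has_dir_deriv_snd: "has_dir_deriv f v x a \<Longrightarrow> has_dir_deriv (\<lambda>y. snd (f y)) v x (snd a)"
  by (rule has_dir_deriv_linear[OF bounded_linear_snd])

lemma has_dir_deriv_vec_nth: "has_dir_deriv f v x a \<Longrightarrow> has_dir_deriv (\<lambda>y. f y $ i) v x (a $ i)"
  by (rule has_dir_deriv_linear[OF bounded_linear_vec_nth])

lemma has_dir_deriv_inner:
  "has_dir_deriv f v x a \<Longrightarrow> has_dir_deriv g v x b \<Longrightarrow>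
    has_dir_deriv (\<lambda>y. inner (f y) (g y)) v x (inner a (g x) + inner (f x) b)"
  unfolding has_dir_deriv_def
  using bounded_bilinear.has_vector_derivative[OF bounded_bilinear_inner,
      of "\<lambda>s. f (x + s *\<^sub>R v)" a 0 UNIV "\<lambda>s. g (x + s *\<^sub>R v)" b]
  by (simp add: add.commute)

lemma has_dir_deriv_mink:
  "has_dir_deriv f v x a \<Longrightarrow> has_dir_deriv g v x b \<Longrightarrow>
    has_dir_deriv (\<lambda>y. mink (f y) (g y)) v x (mink a (g x) + mink (f x) b)"
  unfolding mink_def
  by (rule has_dir_deriv_eq_rhs[OF has_dir_deriv_diff[OF has_dir_deriv_inner has_dir_deriv_inner]])
    (auto intro: has_dir_deriv_fst has_dir_deriv_snd simp: algebra_simps)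

lemma has_dir_deriv_scale_dir: "has_dir_deriv f v x d \<Longrightarrow> has_dir_deriv f (c *\<^sub>R v) x (c *\<^sub>R d)"
proof -
  assume "has_dir_deriv f v x d"
  then have "((\<lambda>s. f (x + s *\<^sub>R v)) has_vector_derivative d) (at (c * 0))"
    by (simp add: has_dir_deriv_def)
  moreover have "((\<lambda>s. c * s) has_vector_derivative c) (at 0)"
    by (auto intro!: derivative_eq_intros simp: has_vector_derivative_def)
  ultimately show ?thesis
    using vector_diff_chain_at by (fastforce simp: has_dir_deriv_def o_def mult.commute)
qed

lemma has_vector_derivative_along_line:
  assumes "has_dir_deriv f v (x + s0 *\<^sub>R v) d"
  shows "((\<lambda>s. f (x + s *\<^sub>R v)) has_vector_derivative d) (at s0)"
proof -
  have "((\<lambda>s. f ((x + s0 *\<^sub>R v) + s *\<^sub>R v)) has_vector_derivative d) (at (s0 - s0))"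
    using assms by (simp add: has_dir_deriv_def)
  moreover have "((\<lambda>s. s - s0) has_vector_derivative 1) (at s0)"
    by (auto intro!: derivative_eq_intros simp: has_vector_derivative_def)
  ultimately have "((\<lambda>s. f ((x + s0 *\<^sub>R v) + (s - s0) *\<^sub>R v)) has_vector_derivative d) (at s0)"
    using vector_diff_chain_at by (fastforce simp: o_def)
  then show ?thesis by (simp add: algebra_simps)
qed

lemma pd_zero_dir: "pd f 0 x = 0"
  by (simp add: pd_def vector_derivative_const_at)

lemma pd_scale_dir: "dir_differentiable f v x \<Longrightarrow> pd f (c *\<^sub>R v) x = c *\<^sub>R pd f v x"
  using pd_eqI[OF has_dir_deriv_scale_dir[OF pd_works]] by blast

lemma open_line_preimage:
  fixes x v :: "'a::real_normed_vector"
  assumes "open S"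
  shows "open {s::real. x + s *\<^sub>R v \<in> S}"
proof -
  have "continuous_on UNIV (\<lambda>s::real. x + s *\<^sub>R v)" by (intro continuous_intros)
  then have "open (UNIV \<inter> (\<lambda>s::real. x + s *\<^sub>R v) -` S)"
    by (rule continuous_open_preimage) (auto simp: assms)
  then show ?thesis by (simp add: vimage_def)
qed

lemma has_dir_deriv_transform_open:
  assumes "open S" "x \<in> S" "\<And>y. y \<in> S \<Longrightarrow> f y = g y" "has_dir_deriv f v x d"
  shows "has_dir_deriv g v x d"
  using assms open_line_preimage[OF assms(1), of x v] unfolding has_dir_deriv_def
  by (auto intro: has_vector_derivative_transform_within_open[where S = "{s. x + s *\<^sub>R v \<in> S}"])

lemma pd_cong_open:
  assumes "open S" "x \<in> S" "\<And>y. y \<in> S \<Longrightarrow> f y = g y"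
  shows "pd f v x = pd g v x"
proof -
  have "eventually (\<lambda>s. s \<in> UNIV \<longrightarrow> f (x + s *\<^sub>R v) = g (x + s *\<^sub>R v)) (nhds 0)"
    unfolding eventually_nhds using open_line_preimage[OF assms(1), of x v] assms(2,3)
    by (intro exI[of _ "{s. x + s *\<^sub>R v \<in> S}"]) auto
  then show ?thesis unfolding pd_def
    by (rule vector_derivative_cong_eq) (auto simp: assms(2,3))
qed

lemma dir_differentiable_transform_open:
  assumes "open S" "x \<in> S" "\<And>y. y \<in> S \<Longrightarrow> f y = g y" "dir_differentiable f v x"
  shows "dir_differentiable g v x"
  using has_dir_deriv_transform_open[OF assms(1-3) pd_works[OF assms(4)]] dir_differentiableI by blast

lemma line_in_open:
  fixes z v :: "'a::real_normed_vector"
  assumes "open S" "z \<in> S"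
  obtains d where "d > 0" "\<And>s. \<bar>s\<bar> < d \<Longrightarrow> z + s *\<^sub>R v \<in> S"
proof -
  obtain r where r: "r > 0" "ball z r \<subseteq> S" using assms openE by blast
  have np: "norm v + 1 > 0" using norm_ge_zero[of v] by linarith
  have "z + s *\<^sub>R v \<in> S" if s: "\<bar>s\<bar> < r / (norm v + 1)" for s
  proof -
    have "norm (s *\<^sub>R v) \<le> \<bar>s\<bar> * (norm v + 1)" by (simp add: mult_left_mono)
    also have "\<dots> < r" using s np by (simp add: pos_less_divide_eq)
    finally show ?thesis using r(2) by (auto simp: dist_norm)
  qed
  then show ?thesis using that[of "r / (norm v + 1)"] r np by simp
qed

section \<open>The Minkowski form\<close>

lemma mink_sym: "mink x y = mink y x" by (simp add: mink_def inner_commute)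
lemma mink_add_left: "mink (x + y) z = mink x z + mink y z" by (simp add: mink_def inner_add_left)
lemma mink_add_right: "mink z (x + y) = mink z x + mink z y" by (simp add: mink_def inner_add_right)
lemma mink_diff_left: "mink (x - y) z = mink x z - mink y z" by (simp add: mink_def inner_diff_left)
lemma mink_diff_right: "mink z (x - y) = mink z x - mink z y" by (simp add: mink_def inner_diff_right)
lemma mink_minus_left: "mink (- x) z = - mink x z" by (simp add: mink_def)
lemma mink_minus_right: "mink z (- x) = - mink z x" by (simp add: mink_def)
lemma mink_scaleR_left: "mink (c *\<^sub>R x) z = c * mink x z" by (simp add: mink_def algebra_simps)
lemma mink_scaleR_right: "mink z (c *\<^sub>R x) = c * mink z x" by (simp add: mink_def algebra_simps)
lemma mink_zero_left: "mink 0 z = 0" by (simp add: mink_def)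
lemma mink_zero_right: "mink z 0 = 0" by (simp add: mink_def)

lemma mink_sum_left: "mink (\<Sum>k\<in>K. f k) z = (\<Sum>k\<in>K. mink (f k) z)"
  by (induction K rule: infinite_finite_induct) (auto simp: mink_zero_left mink_add_left)

lemma mink_sum_right: "mink z (\<Sum>k\<in>K. f k) = (\<Sum>k\<in>K. mink z (f k))"
  by (induction K rule: infinite_finite_induct) (auto simp: mink_zero_right mink_add_right)

lemmas mink_simps = mink_add_left mink_add_right mink_diff_left mink_diff_right mink_minus_left
  mink_minus_right mink_scaleR_left mink_scaleR_right mink_zero_left mink_zero_right
  mink_sum_left mink_sum_right

lemma mink_sum_sum:
  "mink (\<Sum>i\<in>I. a i *\<^sub>R P i) (\<Sum>j\<in>J. b j *\<^sub>R Q j) = (\<Sum>i\<in>I. \<Sum>j\<in>J. a i * b j * mink (P i) (Q j))"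
  unfolding mink_sum_left unfolding mink_sum_right
  by (simp add: mink_scaleR_left mink_scaleR_right mult_ac)

section \<open>Smooth functions\<close>

lemma smooth_on_open: "smooth_on S f \<Longrightarrow> open S"
  by (simp add: smooth_on_def)

lemma smooth_on_continuous_iterpd: "smooth_on S f \<Longrightarrow> continuous_on S (iterpd f vs)"
  by (simp add: smooth_on_def)

lemma smooth_on_dir_differentiable: "smooth_on S f \<Longrightarrow> y \<in> S \<Longrightarrow> dir_differentiable (iterpd f vs) v y"
  by (simp add: smooth_on_def dir_differentiable_def)

lemma smooth_on_has_dir_deriv_iterpd:
  "smooth_on S f \<Longrightarrow> y \<in> S \<Longrightarrow> has_dir_deriv (iterpd f vs) v y (iterpd f (v # vs) y)"
  using pd_works[OF smooth_on_dir_differentiable] by simp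

lemma smooth_on_has_dir_deriv: "smooth_on S f \<Longrightarrow> y \<in> S \<Longrightarrow> has_dir_deriv f v y (pd f v y)"
  using smooth_on_has_dir_deriv_iterpd[of S f y "[]"] by simp

lemma smooth_on_DERIV_line:
  fixes f :: "'a::euclidean_space \<Rightarrow> real"
  assumes "smooth_on S f" "x + t *\<^sub>R v \<in> S"
  shows "((\<lambda>s. f (x + s *\<^sub>R v)) has_real_derivative pd f v (x + t *\<^sub>R v)) (at t)"
  using has_vector_derivative_along_line[OF smooth_on_has_dir_deriv[OF assms]]
  by (simp add: has_real_derivative_iff_has_vector_derivative)

lemma smooth_on_iterpd: "smooth_on S f \<Longrightarrow> smooth_on S (iterpd f vs)"
proof -
  have "iterpd (iterpd f vs) ws = iterpd f (ws @ vs)" for ws by (induction ws) auto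
  then show "smooth_on S f \<Longrightarrow> smooth_on S (iterpd f vs)" unfolding smooth_on_def by metis
qed

lemma iterpd_linear_comp:
  assumes f: "smooth_on S f" and l: "bounded_linear l" and y: "y \<in> S"
  shows "iterpd (\<lambda>y. l (f y)) vs y = l (iterpd f vs y)"
  using y
proof (induction vs arbitrary: y)
  case Nil then show ?case by simp
next
  case (Cons v vs)
  have "pd (iterpd (\<lambda>y. l (f y)) vs) v y = pd (\<lambda>y. l (iterpd f vs y)) v y"
    by (rule pd_cong_open[OF smooth_on_open[OF f] Cons.prems]) (use Cons.IH in auto)
  also have "\<dots> = l (pd (iterpd f vs) v y)"
    by (rule pd_eqI[OF has_dir_deriv_linear[OF l pd_works[OF smooth_on_dir_differentiable[OF f
        Cons.prems]]]])
  finally show ?case by simp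
qed

lemma smooth_on_linear_comp:
  assumes f: "smooth_on S f" and l: "bounded_linear l"
  shows "smooth_on S (\<lambda>y. l (f y))"
  unfolding smooth_on_def
proof (intro conjI allI ballI)
  show S: "open S" using f by (rule smooth_on_open)
  fix vs
  have "continuous_on S (\<lambda>y. l (iterpd f vs y))"
    using smooth_on_continuous_iterpd[OF f] l
    by (intro continuous_on_compose2[OF linear_continuous_on[OF l]]) auto
  then show "continuous_on S (iterpd (\<lambda>y. l (f y)) vs)"
    by (rule continuous_on_eq) (simp add: iterpd_linear_comp[OF f l])
  fix x v assume x: "x \<in> S"
  have "dir_differentiable (\<lambda>y. l (iterpd f vs y)) v x"
    by (rule dir_differentiableI[OF has_dir_deriv_linear[OF l pd_works[OF
        smooth_on_dir_differentiable[OF f x]]]])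
  then have "dir_differentiable (iterpd (\<lambda>y. l (f y)) vs) v x"
    by (rule dir_differentiable_transform_open[OF S x, rotated]) (simp add: iterpd_linear_comp[OF f l])
  then show "(\<lambda>s. iterpd (\<lambda>y. l (f y)) vs (x + s *\<^sub>R v)) differentiable at 0"
    by (simp add: dir_differentiable_def)
qed

lemma iterpd_diff:
  assumes f: "smooth_on S f" and g: "smooth_on S g" and y: "y \<in> S"
  shows "iterpd (\<lambda>y. f y - g y) vs y = iterpd f vs y - iterpd g vs y"
  using y
proof (induction vs arbitrary: y)
  case Nil then show ?case by simp
next
  case (Cons v vs)
  have "pd (iterpd (\<lambda>y. f y - g y) vs) v y = pd (\<lambda>y. iterpd f vs y - iterpd g vs y) v y"
    by (rule pd_cong_open[OF smooth_on_open[OF f] Cons.prems]) (use Cons.IH in auto)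
  also have "\<dots> = pd (iterpd f vs) v y - pd (iterpd g vs) v y"
    by (rule pd_eqI[OF has_dir_deriv_diff[OF pd_works pd_works]])
      (use smooth_on_dir_differentiable[OF f Cons.prems] smooth_on_dir_differentiable[OF g
          Cons.prems] in auto)
  finally show ?case by simp
qed

lemma smooth_on_diff:
  assumes f: "smooth_on S f" and g: "smooth_on S g"
  shows "smooth_on S (\<lambda>y. f y - g y)"
  unfolding smooth_on_def
proof (intro conjI allI ballI)
  show S: "open S" using f by (rule smooth_on_open)
  fix vs
  show "continuous_on S (iterpd (\<lambda>y. f y - g y) vs)"
    using continuous_on_diff[OF smooth_on_continuous_iterpd[OF f] smooth_on_continuous_iterpd[OF g]]
    by (rule continuous_on_eq) (simp add: iterpd_diff[OF f g])
  fix x v assume x: "x \<in> S"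
  have "dir_differentiable (\<lambda>y. iterpd f vs y - iterpd g vs y) v x"
    by (rule dir_differentiableI[OF has_dir_deriv_diff[OF pd_works pd_works]])
      (use smooth_on_dir_differentiable[OF f x] smooth_on_dir_differentiable[OF g x] in auto)
  then have "dir_differentiable (iterpd (\<lambda>y. f y - g y) vs) v x"
    by (rule dir_differentiable_transform_open[OF S x, rotated]) (simp add: iterpd_diff[OF f g])
  then show "(\<lambda>s. iterpd (\<lambda>y. f y - g y) vs (x + s *\<^sub>R v)) differentiable at 0"
    by (simp add: dir_differentiable_def)
qed

lemma mvt_linear_bound:
  fixes g g' :: "real \<Rightarrow> real"
  assumes deriv: "\<And>\<tau>. \<tau> \<in> closed_segment 0 s \<Longrightarrow> (g has_real_derivative g' \<tau>) (at \<tau>)"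
    and bound: "\<And>\<tau>. \<tau> \<in> closed_segment 0 s \<Longrightarrow> \<bar>g' \<tau> - c\<bar> \<le> e"
  shows "\<bar>g s - g 0 - s * c\<bar> \<le> \<bar>s\<bar> * e"
proof -
  define h where "h \<tau> = g \<tau> - \<tau> * c" for \<tau>
  have dh: "\<And>\<tau>. \<tau> \<in> closed_segment 0 s \<Longrightarrow> (h has_real_derivative (g' \<tau> - c)) (at \<tau>)"
    unfolding h_def by (auto intro!: derivative_eq_intros deriv)
  obtain \<tau> where \<tau>: "\<tau> \<in> closed_segment 0 s" "h s - h 0 = s * (g' \<tau> - c)"
  proof (cases "0 < s")
    case True
    then obtain \<tau> where "0 < \<tau>" "\<tau> < s" "h s - h 0 = (s - 0) * (g' \<tau> - c)"
      using MVT2[of 0 s h "\<lambda>\<tau>. g' \<tau> - c"] dh by (auto simp: closed_segment_eq_real_ivl)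
    then show ?thesis using that[of \<tau>] by (simp add: closed_segment_eq_real_ivl)
  next
    case False
    show ?thesis
    proof (cases "s < 0")
      case True
      then obtain \<tau> where "s < \<tau>" "\<tau> < 0" "h 0 - h s = (0 - s) * (g' \<tau> - c)"
        using MVT2[of s 0 h "\<lambda>\<tau>. g' \<tau> - c"] dh by (auto simp: closed_segment_eq_real_ivl)
      then show ?thesis using that[of \<tau>] by (simp add: closed_segment_eq_real_ivl algebra_simps)
    qed (use False that[of 0] in simp)
  qed
  have "g s - g 0 - s * c = s * (g' \<tau> - c)" using \<tau>(2) by (simp add: h_def algebra_simps)
  then have "\<bar>g s - g 0 - s * c\<bar> = \<bar>s\<bar> * \<bar>g' \<tau> - c\<bar>" by (simp add: abs_mult)
  also have "\<dots> \<le> \<bar>s\<bar> * e" by (rule mult_left_mono[OF bound[OF \<tau>(1)]]) simp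
  finally show ?thesis .
qed

lemma increment_bound:
  fixes f :: "'a::euclidean_space \<Rightarrow> real"
  assumes f: "smooth_on S f"
    and near: "\<And>\<tau>. \<tau> \<in> closed_segment 0 t \<Longrightarrow> x + \<tau> *\<^sub>R w \<in> S \<and> \<bar>pd f w (x + \<tau> *\<^sub>R w) - b\<bar> \<le> \<epsilon>"
  shows "\<bar>f (x + t *\<^sub>R w) - f x - t * b\<bar> \<le> \<bar>t\<bar> * \<epsilon>"
  using mvt_linear_bound[of t "\<lambda>\<tau>. f (x + \<tau> *\<^sub>R w)" "\<lambda>\<tau>. pd f w (x + \<tau> *\<^sub>R w)"]
    smooth_on_DERIV_line[OF f] near by simp

lemma deriv_bound_from_increments:
  fixes g :: "real \<Rightarrow> real"
  assumes g: "(g has_real_derivative d) (at 0)" and g0: "g 0 = 0" and \<delta>: "\<delta> > 0"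
    and bound: "\<And>t. 0 < \<bar>t\<bar> \<Longrightarrow> \<bar>t\<bar> < \<delta> \<Longrightarrow> \<bar>g t - t * c\<bar> \<le> K * \<bar>t\<bar>"
  shows "\<bar>d - c\<bar> \<le> K"
proof -
  have "((\<lambda>t. (g t - g 0) / (t - 0)) \<longlongrightarrow> d) (at 0)" using g has_field_derivative_iff by blast
  then have "((\<lambda>t. \<bar>g t / t - c\<bar>) \<longlongrightarrow> \<bar>d - c\<bar>) (at 0)"
    using g0 by (auto intro!: tendsto_intros)
  moreover have "\<bar>g t / t - c\<bar> \<le> K" if t: "t \<noteq> 0" "\<bar>t\<bar> < \<delta>" for t
  proof -
    have "g t / t - c = (g t - t * c) / t" using t by (simp add: field_simps)
    then show ?thesis using bound[of t] t by (simp add: abs_divide pos_divide_le_eq)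
  qed
  then have "eventually (\<lambda>t. \<bar>g t / t - c\<bar> \<le> K) (at 0)"
    unfolding eventually_at using \<delta> by (intro exI[of _ \<delta>]) (auto simp: dist_real_def)
  ultimately show ?thesis by (intro tendsto_upperbound) auto
qed

lemma continuous_on_near_bound:
  fixes f :: "'a::metric_space \<Rightarrow> real"
  assumes "continuous_on S f" "open S" "y \<in> S" "\<epsilon> > 0"
  obtains \<delta> where "\<delta> > 0" "\<And>p. dist p y < \<delta> \<Longrightarrow> p \<in> S \<and> \<bar>f p - f y\<bar> \<le> \<epsilon>"
proof -
  obtain d1 where d1: "d1 > 0" "\<forall>p\<in>S. dist p y < d1 \<longrightarrow> dist (f p) (f y) < \<epsilon>"
    using assms(1,3,4) unfolding continuous_on_iff by blast
  obtain d2 where d2: "d2 > 0" "ball y d2 \<subseteq> S" using assms(2,3) openE by blast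
  show ?thesis
    using d1 d2 that[of "min d1 d2"] by (auto simp: dist_real_def dist_commute subset_iff less_imp_le)
qed

lemma dist_two_steps_less:
  assumes "\<bar>s\<bar> < r / (norm v + norm w + 1)" "\<bar>t\<bar> < r / (norm v + norm w + 1)"
  shows "dist (y + s *\<^sub>R v + t *\<^sub>R w) (y::'a::real_normed_vector) < r"
proof -
  let ?M = "r / (norm v + norm w + 1)"
  have pos: "norm v + norm w + 1 > 0" using norm_ge_zero[of v] norm_ge_zero[of w] by linarith
  have "dist (y + s *\<^sub>R v + t *\<^sub>R w) y \<le> \<bar>s\<bar> * norm v + \<bar>t\<bar> * norm w"
    using norm_triangle_ineq[of "s *\<^sub>R v" "t *\<^sub>R w"] by (simp add: dist_norm add.assoc)
  also have "\<dots> \<le> ?M * norm v + ?M * norm w"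
    using assms by (intro add_mono mult_right_mono) auto
  also have "\<dots> < ?M * (norm v + norm w + 1)"
    using assms(1) by (simp add: distrib_left)
  also have "\<dots> = r" using pos by simp
  finally show ?thesis .
qed

lemma closed_segment_0_abs_le: "\<tau> \<in> closed_segment 0 (t::real) \<Longrightarrow> \<bar>\<tau>\<bar> \<le> \<bar>t\<bar>"
  by (auto simp: closed_segment_eq_real_ivl split: if_splits)

lemma tendsto_at_0_by_bound:
  fixes q :: "real \<Rightarrow> real"
  assumes "\<And>\<epsilon>. \<epsilon> > 0 \<Longrightarrow> \<exists>\<delta>>0. \<forall>s. 0 < \<bar>s\<bar> \<and> \<bar>s\<bar> < \<delta> \<longrightarrow> \<bar>q s - L\<bar> \<le> \<epsilon>"
  shows "(q \<longlongrightarrow> L) (at 0)"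
  unfolding LIM_eq
proof (intro allI impI)
  fix r :: real assume r: "r > 0"
  obtain \<delta> where "\<delta> > 0" "\<forall>s. 0 < \<bar>s\<bar> \<and> \<bar>s\<bar> < \<delta> \<longrightarrow> \<bar>q s - L\<bar> \<le> r / 2"
    using assms[of "r/2"] r by auto
  then show "\<exists>s>0. \<forall>x. x \<noteq> 0 \<and> norm (x - 0) < s \<longrightarrow> norm (q x - L) < r"
    using r by (intro exI[of _ \<delta>]) force
qed

lemma difference_quotient_shifted:
  fixes f :: "'a::euclidean_space \<Rightarrow> real"
  assumes f: "smooth_on S f" and y: "y \<in> S"
  shows "((\<lambda>s. (f (y + s *\<^sub>R v + s *\<^sub>R w) - f (y + s *\<^sub>R v)) / s) \<longlongrightarrow> pd f w y) (at 0)"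
proof (rule tendsto_at_0_by_bound)
  fix \<epsilon> :: real assume \<epsilon>: "\<epsilon> > 0"
  have "continuous_on S (pd f w)" using smooth_on_continuous_iterpd[OF f, of "[w]"] by simp
  then obtain \<delta>0 where \<delta>0: "\<delta>0 > 0" "\<And>p. dist p y < \<delta>0 \<Longrightarrow> p \<in> S \<and> \<bar>pd f w p - pd f w y\<bar> \<le> \<epsilon>"
    using continuous_on_near_bound[OF _ smooth_on_open[OF f] y \<epsilon>] by blast
  define \<delta> where "\<delta> = \<delta>0 / (norm v + norm w + 1)"
  have "\<delta> > 0" unfolding \<delta>_def using \<delta>0(1)
    by (intro divide_pos_pos add_nonneg_pos add_nonneg_nonneg norm_ge_zero) simp_all
  moreover have "\<bar>(f (y + s *\<^sub>R v + s *\<^sub>R w) - f (y + s *\<^sub>R v)) / s - pd f w y\<bar> \<le> \<epsilon>"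
    if s: "0 < \<bar>s\<bar>" "\<bar>s\<bar> < \<delta>" for s
  proof -
    have "\<bar>f (y + s *\<^sub>R v + s *\<^sub>R w) - f (y + s *\<^sub>R v) - s * pd f w y\<bar> \<le> \<bar>s\<bar> * \<epsilon>"
    proof (rule increment_bound[OF f])
      fix \<tau> assume "\<tau> \<in> closed_segment 0 s"
      then have "\<bar>\<tau>\<bar> < \<delta>" using closed_segment_0_abs_le s(2) by fastforce
      then have "dist (y + s *\<^sub>R v + \<tau> *\<^sub>R w) y < \<delta>0"
        using s(2) unfolding \<delta>_def by (intro dist_two_steps_less)
      then show "y + s *\<^sub>R v + \<tau> *\<^sub>R w \<in> S \<and> \<bar>pd f w (y + s *\<^sub>R v + \<tau> *\<^sub>R w) - pd f w y\<bar> \<le> \<epsilon>"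
        using \<delta>0(2) by blast
    qed
    moreover have "(f (y + s *\<^sub>R v + s *\<^sub>R w) - f (y + s *\<^sub>R v)) / s - pd f w y
        = (f (y + s *\<^sub>R v + s *\<^sub>R w) - f (y + s *\<^sub>R v) - s * pd f w y) / s"
      using s by (simp add: field_simps)
    ultimately show ?thesis using s by (simp add: abs_divide pos_divide_le_eq mult.commute)
  qed
  ultimately show "\<exists>\<delta>>0. \<forall>s. 0 < \<bar>s\<bar> \<and> \<bar>s\<bar> < \<delta> \<longrightarrow>
      \<bar>(f (y + s *\<^sub>R v + s *\<^sub>R w) - f (y + s *\<^sub>R v)) / s - pd f w y\<bar> \<le> \<epsilon>"
    by blast
qed

lemma has_dir_deriv_add_dir:
  fixes f :: "'a::euclidean_space \<Rightarrow> real"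
  assumes f: "smooth_on S f" and y: "y \<in> S"
  shows "has_dir_deriv f (v + w) y (pd f v y + pd f w y)"
proof -
  have "((\<lambda>s. (f (y + s *\<^sub>R v) - f y) / s) \<longlongrightarrow> pd f v y) (at 0)"
    using smooth_on_has_dir_deriv[OF f y, of v]
    unfolding has_dir_deriv_real_iff has_field_derivative_iff
    by simp
  then have "((\<lambda>s. (f (y + s *\<^sub>R v + s *\<^sub>R w) - f (y + s *\<^sub>R v)) / s + (f (y + s *\<^sub>R v) - f y) / s)
      \<longlongrightarrow> pd f w y + pd f v y) (at 0)"
    by (intro tendsto_add difference_quotient_shifted[OF f y])
  moreover have "(f (y + s *\<^sub>R v + s *\<^sub>R w) - f (y + s *\<^sub>R v)) / s + (f (y + s *\<^sub>R v) - f y) / s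
      = (f (y + s *\<^sub>R (v + w)) - f y) / (s - 0)" for s
    by (simp add: scaleR_right_distrib add.assoc diff_divide_distrib)
  ultimately show ?thesis
    unfolding has_dir_deriv_real_iff has_field_derivative_iff by (simp add: add.commute)
qed

lemma pd_add_dir:
  fixes f :: "'a::euclidean_space \<Rightarrow> real"
  shows "smooth_on S f \<Longrightarrow> y \<in> S \<Longrightarrow> pd f (v + w) y = pd f v y + pd f w y"
  using has_dir_deriv_add_dir pd_eqI by blast

lemma pd_sum_dir:
  fixes f :: "'a::euclidean_space \<Rightarrow> real"
  assumes "smooth_on S f" "y \<in> S" "finite K"
  shows "pd f (\<Sum>k\<in>K. c k *\<^sub>R u k) y = (\<Sum>k\<in>K. c k * pd f (u k) y)"
  using assms(3)
proof (induction K rule: finite_induct)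
  case empty then show ?case by (simp add: pd_zero_dir)
next
  case (insert k K)
  then show ?case
    using pd_add_dir[OF assms(1,2)] pd_scale_dir[OF smooth_on_dir_differentiable[OF assms(1,2), of
        "[]", simplified]]
    by simp
qed

lemma mixed_increment_bound:
  fixes f :: "'a::euclidean_space \<Rightarrow> real"
  assumes f: "smooth_on S f"
    and near: "\<And>p. dist p y < \<delta>0 \<Longrightarrow> p \<in> S \<and> \<bar>pd (pd f v) w p - L\<bar> \<le> \<epsilon>"
    and s: "\<bar>s\<bar> < \<delta>0 / (norm v + norm w + 1)" and t: "\<bar>t\<bar> < \<delta>0 / (norm v + norm w + 1)"
  shows "\<bar>f (y + s *\<^sub>R v + t *\<^sub>R w) - f (y + s *\<^sub>R v) - f (y + t *\<^sub>R w) + f y - s * (t * L)\<bar>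
    \<le> \<bar>s\<bar> * (\<bar>t\<bar> * \<epsilon>)"
proof -
  have inS: "y + a *\<^sub>R v + b *\<^sub>R w \<in> S" if "\<bar>a\<bar> \<le> \<bar>s\<bar>" "\<bar>b\<bar> \<le> \<bar>t\<bar>" for a b
    using near[of "y + a *\<^sub>R v + b *\<^sub>R w"] dist_two_steps_less[of a \<delta>0 v w b y] that s t by auto
  have fv: "smooth_on S (pd f v)" using smooth_on_iterpd[OF f, of "[v]"] by simp
  have inner: "\<bar>pd f v (y + \<sigma> *\<^sub>R v + t *\<^sub>R w) - pd f v (y + \<sigma> *\<^sub>R v) - t * L\<bar> \<le> \<bar>t\<bar> * \<epsilon>"
    if \<sigma>: "\<sigma> \<in> closed_segment 0 s" for \<sigma>
  proof (rule increment_bound[OF fv])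
    fix \<tau> assume "\<tau> \<in> closed_segment 0 t"
    then show "y + \<sigma> *\<^sub>R v + \<tau> *\<^sub>R w \<in> S \<and> \<bar>pd (pd f v) w (y + \<sigma> *\<^sub>R v + \<tau> *\<^sub>R w) - L\<bar> \<le> \<epsilon>"
      using near dist_two_steps_less[of \<sigma> \<delta>0 v w \<tau> y] closed_segment_0_abs_le[OF \<sigma>]
        closed_segment_0_abs_le s t by force
  qed
  have "\<bar>(f (y + t *\<^sub>R w + s *\<^sub>R v) - f (y + s *\<^sub>R v)) - (f (y + t *\<^sub>R w + 0 *\<^sub>R v) - f (y + 0 *\<^sub>R v))
      - s * (t * L)\<bar> \<le> \<bar>s\<bar> * (\<bar>t\<bar> * \<epsilon>)"
  proof (rule mvt_linear_bound)
    fix \<sigma> assume \<sigma>: "\<sigma> \<in> closed_segment 0 s"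
    have "y + t *\<^sub>R w + \<sigma> *\<^sub>R v \<in> S" "y + 0 *\<^sub>R w + \<sigma> *\<^sub>R v \<in> S"
      using inS[of \<sigma> t] inS[of \<sigma> 0] closed_segment_0_abs_le[OF \<sigma>] by (simp_all add: algebra_simps)
    then show "((\<lambda>\<sigma>. f (y + t *\<^sub>R w + \<sigma> *\<^sub>R v) - f (y + \<sigma> *\<^sub>R v)) has_real_derivative
        pd f v (y + t *\<^sub>R w + \<sigma> *\<^sub>R v) - pd f v (y + \<sigma> *\<^sub>R v)) (at \<sigma>)"
      using smooth_on_DERIV_line[OF f, of "y + t *\<^sub>R w" \<sigma> v] smooth_on_DERIV_line[OF f, of y \<sigma> v]
      by (intro DERIV_diff) simp_all
    show "\<bar>pd f v (y + t *\<^sub>R w + \<sigma> *\<^sub>R v) - pd f v (y + \<sigma> *\<^sub>R v) - t * L\<bar> \<le> \<bar>t\<bar> * \<epsilon>"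
      using inner[OF \<sigma>] by (simp add: algebra_simps)
  qed
  then show ?thesis by (simp add: algebra_simps)
qed

lemma pd_pd_commute:
  fixes f :: "'a::euclidean_space \<Rightarrow> real"
  assumes f: "smooth_on S f" and y: "y \<in> S"
  shows "pd (pd f w) v y = pd (pd f v) w y"
proof -
  let ?L = "pd (pd f v) w y"
  have "\<bar>pd (pd f w) v y - ?L\<bar> \<le> \<epsilon>" if \<epsilon>: "\<epsilon> > 0" for \<epsilon>
  proof -
    have "continuous_on S (pd (pd f v) w)" using smooth_on_continuous_iterpd[OF f, of "[w, v]"] by simp
    then obtain \<delta>0 where \<delta>0: "\<delta>0 > 0" "\<And>p. dist p y < \<delta>0 \<Longrightarrow> p \<in> S \<and> \<bar>pd (pd f v) w p - ?L\<bar> \<le> \<epsilon>"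
      using continuous_on_near_bound[OF _ smooth_on_open[OF f] y \<epsilon>] by blast
    define \<delta> where "\<delta> = \<delta>0 / (norm v + norm w + 1)"
    have \<delta>: "\<delta> > 0" unfolding \<delta>_def using \<delta>0(1)
    by (intro divide_pos_pos add_nonneg_pos add_nonneg_nonneg norm_ge_zero) simp_all
    have row: "\<bar>(pd f w (y + s *\<^sub>R v) - pd f w y) - s * ?L\<bar> \<le> \<bar>s\<bar> * \<epsilon>" if s: "\<bar>s\<bar> < \<delta>" for s
    proof (rule deriv_bound_from_increments[OF _ _ \<delta>])
      have "y + s *\<^sub>R v + 0 *\<^sub>R w \<in> S"
        using \<delta>0(2) dist_two_steps_less[of s \<delta>0 v w 0 y] s \<delta> unfolding \<delta>_def by auto
      then show "((\<lambda>t. f (y + s *\<^sub>R v + t *\<^sub>R w) - f (y + s *\<^sub>R v) - f (y + t *\<^sub>R w) + f y)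
          has_real_derivative pd f w (y + s *\<^sub>R v) - pd f w y) (at 0)"
        using smooth_on_DERIV_line[OF f, of "y + s *\<^sub>R v" 0 w] smooth_on_DERIV_line[OF f, of y 0 w] y
        by (auto intro!: derivative_eq_intros)
      show "\<bar>f (y + s *\<^sub>R v + t *\<^sub>R w) - f (y + s *\<^sub>R v) - f (y + t *\<^sub>R w) + f y - t * (s * ?L)\<bar>
          \<le> \<bar>s\<bar> * \<epsilon> * \<bar>t\<bar>" if "\<bar>t\<bar> < \<delta>" for t
        using mixed_increment_bound[OF f \<delta>0(2), where s=s and t=t] s that unfolding \<delta>_def
        by (simp add: algebra_simps)
    qed simp
    show ?thesis
    proof (rule deriv_bound_from_increments[OF _ _ \<delta>])
      show "((\<lambda>s. pd f w (y + s *\<^sub>R v) - pd f w y) has_real_derivative pd (pd f w) v y) (at 0)"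
        using smooth_on_has_dir_deriv_iterpd[OF f y, of "[w]" v]
        by (auto simp: has_dir_deriv_real_iff intro!: derivative_eq_intros)
      show "\<bar>pd f w (y + s *\<^sub>R v) - pd f w y - s * ?L\<bar> \<le> \<epsilon> * \<bar>s\<bar>" if "\<bar>s\<bar> < \<delta>" for s
        using row[OF that] by (simp add: mult.commute)
    qed simp
  qed
  then show ?thesis
    by (metis abs_le_zero_iff dense_ge eq_iff_diff_eq_0 not_less)
qed

section \<open>Functions built from the derivatives of a smooth map\<close>

text \<open>Smoothness of the metric, its inverse and the normal projection is obtained without a
  general chain rule: these functions lie in the algebra generated by the coordinates of the
  iterated derivatives of the immersion, closed under exponentials and nonvanishing inverses, and
  directional derivatives of members of this algebra are again members.\<close>

inductive elementary :: "'a::real_normed_vector set \<Rightarrow> ('a \<Rightarrow> real) set \<Rightarrow> ('a \<Rightarrow> real) \<Rightarrow> bool"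
  for S G where
  gen: "g \<in> G \<Longrightarrow> elementary S G g"
| const: "elementary S G (\<lambda>y. c)"
| add: "elementary S G f \<Longrightarrow> elementary S G g \<Longrightarrow> elementary S G (\<lambda>y. f y + g y)"
| mult: "elementary S G f \<Longrightarrow> elementary S G g \<Longrightarrow> elementary S G (\<lambda>y. f y * g y)"
| exp: "elementary S G f \<Longrightarrow> elementary S G (\<lambda>y. exp (f y))"
| inverse: "elementary S G f \<Longrightarrow> (\<forall>y\<in>S. f y \<noteq> 0) \<Longrightarrow> elementary S G (\<lambda>y. inverse (f y))"
| cong: "elementary S G f \<Longrightarrow> (\<forall>y\<in>S. f y = g y) \<Longrightarrow> elementary S G g"

lemma elementary_minus: "elementary S G f \<Longrightarrow> elementary S G (\<lambda>y. - f y)"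
  using elementary.mult[OF elementary.const[of S G "-1"], of f] by (auto intro: elementary.cong)

lemma elementary_diff: "elementary S G f \<Longrightarrow> elementary S G g \<Longrightarrow> elementary S G (\<lambda>y. f y - g y)"
  using elementary.add[OF _ elementary_minus[of S G g], of f] by simp

lemma elementary_divide:
  "elementary S G f \<Longrightarrow> elementary S G g \<Longrightarrow> (\<forall>y\<in>S. g y \<noteq> 0) \<Longrightarrow> elementary S G (\<lambda>y. f y / g y)"
  using elementary.mult[OF _ elementary.inverse[of S G g], of f] by (simp add: divide_inverse)

lemma elementary_power2: "elementary S G f \<Longrightarrow> elementary S G (\<lambda>y. (f y)\<^sup>2)"
  using elementary.mult[of S G f f] by (simp add: power2_eq_square)

lemma elementary_sum:
  "finite K \<Longrightarrow> (\<And>k. k \<in> K \<Longrightarrow> elementary S G (f k)) \<Longrightarrow> elementary S G (\<lambda>y. \<Sum>k\<in>K. f k y)"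
  by (induction K rule: finite_induct) (auto intro: elementary.const elementary.add)

lemma elementary_prod:
  "finite K \<Longrightarrow> (\<And>k. k \<in> K \<Longrightarrow> elementary S G (f k)) \<Longrightarrow> elementary S G (\<lambda>y. \<Prod>k\<in>K. f k y)"
  by (induction K rule: finite_induct) (auto intro: elementary.const elementary.mult)

definition diff_elementary :: "'a::real_normed_vector set \<Rightarrow> ('a \<Rightarrow> real) set \<Rightarrow> ('a \<Rightarrow> real) \<Rightarrow> bool" where
  "diff_elementary S G f \<longleftrightarrow> continuous_on S f \<and> (\<forall>y\<in>S. \<forall>v. dir_differentiable f v y) \<and>
     (\<forall>v. \<exists>g. elementary S G g \<and> (\<forall>y\<in>S. pd f v y = g y))"

lemma diff_elementaryI:
  assumes "continuous_on S f" "\<And>y v. y \<in> S \<Longrightarrow> has_dir_deriv f v y (f' v y)"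
    and "\<And>v. elementary S G (f' v)"
  shows "diff_elementary S G f"
  unfolding diff_elementary_def
proof (intro conjI allI ballI)
  show "dir_differentiable f v y" if "y \<in> S" for y v
    using dir_differentiableI[OF assms(2)[OF that]] .
  show "\<exists>g. elementary S G g \<and> (\<forall>y\<in>S. pd f v y = g y)" for v
    using assms(3)[of v] pd_eqI[OF assms(2)] by blast
qed (fact assms(1))
lemma diff_elementaryE:
  assumes f: "diff_elementary S G f"
  obtains f' where "continuous_on S f" "\<And>y v. y \<in> S \<Longrightarrow> has_dir_deriv f v y (f' v y)"
    "\<And>v. elementary S G (f' v)"
proof -
  have "\<forall>v. \<exists>g. elementary S G g \<and> (\<forall>y\<in>S. pd f v y = g y)"
    using f unfolding diff_elementary_def by blast
  then obtain f' where f': "\<forall>v. elementary S G (f' v) \<and> (\<forall>y\<in>S. pd f v y = f' v y)"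
    using choice[of "\<lambda>v g. elementary S G g \<and> (\<forall>y\<in>S. pd f v y = g y)"] by blast
  show ?thesis
  proof (rule that[of f'])
    show "continuous_on S f" using f unfolding diff_elementary_def by blast
    show "has_dir_deriv f v y (f' v y)" if y: "y \<in> S" for y v
    proof -
      have "dir_differentiable f v y" using f y unfolding diff_elementary_def by blast
      then show ?thesis using pd_works[of f v y] f' y by simp
    qed
    show "elementary S G (f' v)" for v using f' by blast
  qed
qed

lemma diff_elementary_add:
  assumes "diff_elementary S G f" "diff_elementary S G g"
  shows "diff_elementary S G (\<lambda>y. f y + g y)"
proof -
  obtain f' where f': "continuous_on S f" "\<And>y v. y \<in> S \<Longrightarrow> has_dir_deriv f v y (f' v y)"
    "\<And>v. elementary S G (f' v)" using assms(1) by (rule diff_elementaryE) blast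
  obtain g' where g': "continuous_on S g" "\<And>y v. y \<in> S \<Longrightarrow> has_dir_deriv g v y (g' v y)"
    "\<And>v. elementary S G (g' v)" using assms(2) by (rule diff_elementaryE) blast
  show ?thesis
    by (rule diff_elementaryI[where f'="\<lambda>v y. f' v y + g' v y"])
      (simp_all add: continuous_on_add f' g' has_dir_deriv_add elementary.add)
qed

lemma diff_elementary_mult:
  assumes "elementary S G f" "elementary S G g" "diff_elementary S G f" "diff_elementary S G g"
  shows "diff_elementary S G (\<lambda>y. f y * g y)"
proof -
  obtain f' where f': "continuous_on S f" "\<And>y v. y \<in> S \<Longrightarrow> has_dir_deriv f v y (f' v y)"
    "\<And>v. elementary S G (f' v)" using assms(3) by (rule diff_elementaryE) blast
  obtain g' where g': "continuous_on S g" "\<And>y v. y \<in> S \<Longrightarrow> has_dir_deriv g v y (g' v y)"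
    "\<And>v. elementary S G (g' v)" using assms(4) by (rule diff_elementaryE) blast
  show ?thesis
    by (rule diff_elementaryI[where f'="\<lambda>v y. f' v y * g y + f y * g' v y"])
      (simp_all add: continuous_on_mult f' g' has_dir_deriv_mult elementary.add elementary.mult
          assms(1,2))
qed

lemma diff_elementary_exp:
  assumes "elementary S G f" "diff_elementary S G f"
  shows "diff_elementary S G (\<lambda>y. exp (f y))"
proof -
  obtain f' where f': "continuous_on S f" "\<And>y v. y \<in> S \<Longrightarrow> has_dir_deriv f v y (f' v y)"
    "\<And>v. elementary S G (f' v)" using assms(2) by (rule diff_elementaryE) blast
  show ?thesis
    by (rule diff_elementaryI[where f'="\<lambda>v y. exp (f y) * f' v y"])
      (simp_all add: continuous_on_exp f' has_dir_deriv_exp elementary.mult elementary.exp assms(1))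
qed

lemma diff_elementary_inverse:
  assumes "elementary S G f" "\<forall>y\<in>S. f y \<noteq> 0" "diff_elementary S G f"
  shows "diff_elementary S G (\<lambda>y. inverse (f y))"
proof -
  obtain f' where f': "continuous_on S f" "\<And>y v. y \<in> S \<Longrightarrow> has_dir_deriv f v y (f' v y)"
    "\<And>v. elementary S G (f' v)" using assms(3) by (rule diff_elementaryE) blast
  show ?thesis
  proof (rule diff_elementaryI[where f'="\<lambda>v y. - (inverse (f y) * inverse (f y)) * f' v y"])
    show "continuous_on S (\<lambda>y. inverse (f y))"
      using assms(2) by (intro continuous_on_inverse f'(1)) blast
    show "has_dir_deriv (\<lambda>y. inverse (f y)) v y (- (inverse (f y) * inverse (f y)) * f' v y)"
      if "y \<in> S" for y v using assms(2) that by (intro has_dir_deriv_inverse f'(2)) auto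
    show "elementary S G (\<lambda>y. - (inverse (f y) * inverse (f y)) * f' v y)" for v
      using assms(1,2) by (intro elementary_minus elementary.mult elementary.inverse f'(3))
  qed
qed

lemma diff_elementary_cong:
  assumes S: "open S" and f: "diff_elementary S G f" and eq: "\<forall>y\<in>S. f y = g y"
  shows "diff_elementary S G g"
proof -
  obtain f' where f': "continuous_on S f" "\<And>y v. y \<in> S \<Longrightarrow> has_dir_deriv f v y (f' v y)"
    "\<And>v. elementary S G (f' v)" using f by (rule diff_elementaryE) blast
  show ?thesis
  proof (rule diff_elementaryI[where f'=f'])
    show "continuous_on S g" using continuous_on_eq[OF f'(1)] eq by blast
    show "has_dir_deriv g v y (f' v y)" if "y \<in> S" for y v
      using has_dir_deriv_transform_open[OF S that _ f'(2)[OF that]] eq by blast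
  qed (rule f'(3))
qed

lemma elementary_imp_diff_elementary:
  assumes S: "open S" and G: "\<forall>g\<in>G. diff_elementary S G g" and f: "elementary S G f"
  shows "diff_elementary S G f"
  using f
proof (induction rule: elementary.induct)
  case (const c)
  show ?case
    by (rule diff_elementaryI[where f'="\<lambda>v y. 0"]) (auto intro: has_dir_deriv_const elementary.const)
qed (use G S in \<open>auto intro: diff_elementary_add diff_elementary_mult diff_elementary_exp
       diff_elementary_inverse diff_elementary_cong\<close>)

lemma elementary_iterpd:
  assumes S: "open S" and G: "\<forall>g\<in>G. diff_elementary S G g" and f: "elementary S G f"
  obtains g where "elementary S G g" "\<And>y. y \<in> S \<Longrightarrow> iterpd f vs y = g y"
proof (induction vs arbitrary: thesis)
  case Nil then show ?case using f by auto
next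
  case (Cons v vs)
  obtain g where g: "elementary S G g" "\<And>y. y \<in> S \<Longrightarrow> iterpd f vs y = g y" by (rule Cons.IH) blast
  obtain g' where g': "\<And>y v. y \<in> S \<Longrightarrow> has_dir_deriv g v y (g' v y)" "\<And>v. elementary S G (g' v)"
    using elementary_imp_diff_elementary[OF S G g(1)] by (rule diff_elementaryE) blast
  have "iterpd f (v # vs) y = g' v y" if y: "y \<in> S" for y
    using pd_cong_open[OF S y g(2)] pd_eqI[OF g'(1)[OF y]] by simp
  then show ?case using Cons.prems g'(2) by blast
qed

lemma elementary_smooth_on:
  fixes S :: "'a::euclidean_space set"
  assumes S: "open S" and G: "\<forall>g\<in>G. diff_elementary S G g" and f: "elementary S G f"
  shows "smooth_on S f"
  unfolding smooth_on_def
proof (intro conjI allI ballI)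
  fix vs
  obtain g where g: "elementary S G g" "\<And>y. y \<in> S \<Longrightarrow> iterpd f vs y = g y"
    using elementary_iterpd[OF S G f] by blast
  obtain g' where g': "continuous_on S g" "\<And>y v. y \<in> S \<Longrightarrow> has_dir_deriv g v y (g' v y)"
    using elementary_imp_diff_elementary[OF S G g(1)] by (rule diff_elementaryE) blast
  show "continuous_on S (iterpd f vs)" using g'(1) g(2) by (auto intro: continuous_on_eq)
  fix x v assume x: "x \<in> S"
  have "dir_differentiable (iterpd f vs) v x"
    by (rule dir_differentiable_transform_open[OF S x _ dir_differentiableI[OF g'(2)[OF x]]]) (simp
        add: g(2))
  then show "(\<lambda>s. iterpd f vs (x + s *\<^sub>R v)) differentiable at 0" by (simp add: dir_differentiable_def)
qed (fact S)

definition coord_gens :: "('a::real_normed_vector \<Rightarrow> (real^'n::finite) \<times> (real^'m::finite)) \<Rightarrow> ('a \<Rightarrow>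
  real) set" where
  "coord_gens X = {g. \<exists>vs i. g = (\<lambda>y. fst (iterpd X vs y) $ i)} \<union> {g. \<exists>vs i. g = (\<lambda>y. snd (iterpd X
      vs y) $ i)}
     \<union> {g. bounded_linear g}"

abbreviation elementary_on where
  "elementary_on S X \<equiv> elementary S (coord_gens X)"

definition elementary_vec_on :: "'a::real_normed_vector set \<Rightarrow> ('a \<Rightarrow> (real^'n::finite) \<times>
  (real^'m::finite))
    \<Rightarrow> ('a \<Rightarrow> (real^'n) \<times> (real^'m)) \<Rightarrow> bool" where
  "elementary_vec_on S X F \<longleftrightarrow>
     (\<forall>i. elementary_on S X (\<lambda>y. fst (F y) $ i)) \<and> (\<forall>i. elementary_on S X (\<lambda>y. snd (F y) $ i))"

lemma bounded_linear_fst_nth: "bounded_linear (\<lambda>p::(real^'n) \<times> 'b::real_normed_vector. fst p $ i)"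
  by (intro bounded_linear_compose[OF bounded_linear_vec_nth bounded_linear_fst])

lemma bounded_linear_snd_nth: "bounded_linear (\<lambda>p::'b::real_normed_vector \<times> (real^'n). snd p $ i)"
  by (intro bounded_linear_compose[OF bounded_linear_vec_nth bounded_linear_snd])

lemma diff_elementary_linear_iterpd:
  assumes X: "smooth_on S X" and l: "bounded_linear l"
    and gen: "\<And>vs. elementary S G (\<lambda>y. l (iterpd X vs y))"
  shows "diff_elementary S G (\<lambda>y. l (iterpd X vs y))"
proof (rule diff_elementaryI[where f'="\<lambda>v y. l (iterpd X (v # vs) y)"])
  show "continuous_on S (\<lambda>y. l (iterpd X vs y))"
    using smooth_on_continuous_iterpd[OF X]
    by (intro continuous_on_compose2[OF linear_continuous_on[OF l]]) auto
  show "has_dir_deriv (\<lambda>y. l (iterpd X vs y)) v y (l (iterpd X (v # vs) y))" if "y \<in> S" for y v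
    by (rule has_dir_deriv_linear[OF l smooth_on_has_dir_deriv_iterpd[OF X that]])
qed (rule gen)

lemma coord_gens_diff_elementary:
  assumes X: "smooth_on S X"
  shows "\<forall>g\<in>coord_gens X. diff_elementary S (coord_gens X) g"
proof
  fix g assume g: "g \<in> coord_gens X"
  have fst_gen: "elementary_on S X (\<lambda>y. fst (iterpd X vs y) $ i)" for vs i
    by (rule elementary.gen) (auto simp: coord_gens_def)
  have snd_gen: "elementary_on S X (\<lambda>y. snd (iterpd X vs y) $ i)" for vs i
    by (rule elementary.gen) (auto simp: coord_gens_def)
  consider vs i where "g = (\<lambda>y. fst (iterpd X vs y) $ i)" | vs i where "g = (\<lambda>y. snd (iterpd X vs y)
      $ i)"
    | "bounded_linear g"
    using g unfolding coord_gens_def by blast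
  then show "diff_elementary S (coord_gens X) g"
  proof cases
    case 1
    then show ?thesis using diff_elementary_linear_iterpd[OF X bounded_linear_fst_nth fst_gen] by simp
  next
    case 2
    then show ?thesis using diff_elementary_linear_iterpd[OF X bounded_linear_snd_nth snd_gen] by simp
  next
    case 3
    show ?thesis
      by (rule diff_elementaryI[where f'="\<lambda>v y. g v"])
        (use has_dir_deriv_linear[OF 3 has_dir_deriv_ident] in
          \<open>auto intro: linear_continuous_on[OF 3] elementary.const\<close>)
  qed
qed

lemma elementary_on_smooth_on:
  "smooth_on S X \<Longrightarrow> elementary_on S X f \<Longrightarrow> smooth_on S f"
  using elementary_smooth_on[OF smooth_on_open coord_gens_diff_elementary] by blast

lemma elementary_on_linear: "bounded_linear l \<Longrightarrow> elementary_on S X l"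
  by (rule elementary.gen) (simp add: coord_gens_def)

lemma elementary_vec_on_iterpd: "elementary_vec_on S X (iterpd X vs)"
  unfolding elementary_vec_on_def by (auto intro!: elementary.gen simp: coord_gens_def)

lemma elementary_vec_on_const: "elementary_vec_on S X (\<lambda>y. c)"
  unfolding elementary_vec_on_def by (auto intro: elementary.const)

lemma elementary_vec_on_add:
  "elementary_vec_on S X F \<Longrightarrow> elementary_vec_on S X G \<Longrightarrow> elementary_vec_on S X (\<lambda>y. F y + G y)"
  unfolding elementary_vec_on_def by (auto intro: elementary.add)

lemma elementary_vec_on_diff:
  "elementary_vec_on S X F \<Longrightarrow> elementary_vec_on S X G \<Longrightarrow> elementary_vec_on S X (\<lambda>y. F y - G y)"
  unfolding elementary_vec_on_def by (auto intro: elementary_diff)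

lemma elementary_vec_on_scaleR:
  "elementary_on S X f \<Longrightarrow> elementary_vec_on S X F \<Longrightarrow> elementary_vec_on S X (\<lambda>y. f y *\<^sub>R F y)"
  unfolding elementary_vec_on_def by (auto intro: elementary.mult)

lemma elementary_vec_on_sum:
  "finite K \<Longrightarrow> (\<And>k. k \<in> K \<Longrightarrow> elementary_vec_on S X (F k)) \<Longrightarrow> elementary_vec_on S X (\<lambda>y. \<Sum>k\<in>K. F k y)"
  by (induction K rule: finite_induct) (auto intro: elementary_vec_on_add elementary_vec_on_const)

lemma elementary_on_mink:
  "elementary_vec_on S X F \<Longrightarrow> elementary_vec_on S X G \<Longrightarrow> elementary_on S X (\<lambda>y. mink (F y) (G y))"
  unfolding mink_def elementary_vec_on_def inner_vec_def
  by (auto intro!: elementary_diff elementary_sum elementary.mult)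

lemma elementary_on_det:
  "(\<And>i j. elementary_on S X (\<lambda>y. M y $ i $ j)) \<Longrightarrow> elementary_on S X (\<lambda>y. det (M y ::
      real^'k::finite^'k))"
  unfolding det_def
  by (auto intro!: elementary_sum elementary.mult elementary_prod elementary.const simp:
      finite_permutations)

lemma iterpd_swap:
  fixes X :: "'a::euclidean_space \<Rightarrow> (real^'n::finite) \<times> (real^'m::finite)"
  assumes X: "smooth_on S X" and y: "y \<in> S"
  shows "iterpd X (v # w # vs) y = iterpd X (w # v # vs) y"
proof -
  have split: "iterpd X (ws @ vs) = iterpd (iterpd X vs) ws" for ws by (induction ws) auto
  have Xvs: "smooth_on S (iterpd X vs)" by (rule smooth_on_iterpd[OF X])
  have "l (iterpd X (v # w # vs) y) = l (iterpd X (w # v # vs) y)"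
    if l: "bounded_linear l" for l :: "(real^'n) \<times> (real^'m) \<Rightarrow> real"
  proof -
    have "l (iterpd X (v # w # vs) y) = iterpd (\<lambda>y. l (iterpd X vs y)) [v, w] y"
      using split[of "[v, w]"] iterpd_linear_comp[OF Xvs l y, of "[v, w]"] by simp
    also have "\<dots> = iterpd (\<lambda>y. l (iterpd X vs y)) [w, v] y"
      using pd_pd_commute[OF smooth_on_linear_comp[OF Xvs l] y, of w v] by simp
    also have "\<dots> = l (iterpd X (w # v # vs) y)"
      using split[of "[w, v]"] iterpd_linear_comp[OF Xvs l y, of "[w, v]"] by simp
    finally show ?thesis .
  qed
  from this[OF bounded_linear_fst_nth] this[OF bounded_linear_snd_nth] show ?thesis
    by (simp add: prod_eq_iff vec_eq_iff)
qed

section \<open>The induced metric and the normal projection\<close>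

definition quad :: "real^'n^'n \<Rightarrow> real^'n \<Rightarrow> real" where
  "quad M x = (\<Sum>i\<in>UNIV. \<Sum>j\<in>UNIV. x$i * x$j * M$i$j)"

lemma quad_eq_inner: "quad M x = x \<bullet> (M *v x)"
  by (auto simp: quad_def inner_vec_def matrix_vector_mult_def sum_distrib_left mult_ac intro!:
      sum.cong)

lemma sum_mult_delta [simp]: "(\<Sum>j\<in>(UNIV::'k::finite set). (f j::real) * (if j = k then 1 else 0)) =
  f k"
proof -
  have "(\<Sum>j\<in>(UNIV::'k set). f j * (if j = k then 1 else 0)) = (\<Sum>j\<in>UNIV. if j = k then f j else 0)"
    by (rule sum.cong) auto
  then show ?thesis by simp
qed

lemma gmat_sym: "gmat X y $ i $ j = gmat X y $ j $ i"
  by (simp add: gmat_def mink_sym)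

lemma transpose_gmat: "transpose (gmat X y) = gmat X y"
  by (simp add: transpose_def vec_eq_iff gmat_sym)

lemma mink_tangent_eq_quad_gmat: "mink (\<Sum>i\<in>UNIV. v$i *\<^sub>R dX X i y) (\<Sum>i\<in>UNIV. v$i *\<^sub>R dX X i y) = quad
  (gmat X y) v"
  by (simp add: mink_sum_sum quad_def gmat_def)

lemma quad_gmat_pos: "spacelike_at X y \<Longrightarrow> v \<noteq> 0 \<Longrightarrow> quad (gmat X y) v > 0"
proof -
  assume "spacelike_at X y" "v \<noteq> 0"
  then have "0 < mink (\<Sum>i\<in>UNIV. v$i *\<^sub>R dX X i y) (\<Sum>i\<in>UNIV. v$i *\<^sub>R dX X i y)"
    by (simp add: spacelike_at_def)
  then show ?thesis by (simp only: mink_tangent_eq_quad_gmat)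
qed

lemma quad_gmat_nonneg: "spacelike_at X y \<Longrightarrow> quad (gmat X y) v \<ge> 0"
  using quad_gmat_pos[of X y v] by (cases "v = 0") (auto simp: quad_def less_imp_le)

lemma gmat_invertible:
  assumes sp: "spacelike_at X y" shows "invertible (gmat X y)"
proof -
  have "\<forall>x. gmat X y *v x = 0 \<longrightarrow> x = 0"
  proof (intro allI impI)
    fix x assume "gmat X y *v x = 0"
    then have "quad (gmat X y) x = 0" by (simp add: quad_eq_inner)
    then show "x = 0" using quad_gmat_pos[OF sp, of x] by (cases "x = 0") auto
  qed
  then show ?thesis using matrix_left_invertible_ker invertible_left_inverse by blast
qed

lemma ginv_mult:
  assumes sp: "spacelike_at X y"
  shows "ginv X y ** gmat X y = mat 1" "gmat X y ** ginv X y = mat 1"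
proof -
  have "\<exists>A'. gmat X y ** A' = mat 1 \<and> A' ** gmat X y = mat 1"
    using gmat_invertible[OF sp] unfolding invertible_def by blast
  then have "gmat X y ** ginv X y = mat 1 \<and> ginv X y ** gmat X y = mat 1"
    unfolding ginv_def matrix_inv_def by (rule someI_ex)
  then show "ginv X y ** gmat X y = mat 1" "gmat X y ** ginv X y = mat 1" by auto
qed

lemma ginv_gmat_entry:
  "spacelike_at X y \<Longrightarrow> (\<Sum>k\<in>UNIV. ginv X y $ i $ k * gmat X y $ k $ j) = (if i = j then 1 else 0)"
  using ginv_mult(1)[of X y] by (simp add: vec_eq_iff matrix_matrix_mult_def mat_def)

lemma gmat_ginv_entry:
  "spacelike_at X y \<Longrightarrow> (\<Sum>k\<in>UNIV. gmat X y $ i $ k * ginv X y $ k $ j) = (if i = j then 1 else 0)"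
  using ginv_mult(2)[of X y] by (simp add: vec_eq_iff matrix_matrix_mult_def mat_def)

lemma ginv_sym:
  assumes sp: "spacelike_at X y" shows "ginv X y $ i $ j = ginv X y $ j $ i"
proof -
  let ?g = "gmat X y" and ?h = "ginv X y"
  have "transpose ?h ** ?g = transpose (?g ** ?h)"
    by (simp add: matrix_transpose_mul transpose_gmat)
  also have "\<dots> = mat 1" using ginv_mult(2)[OF sp] by simp
  finally have l: "transpose ?h ** ?g = mat 1" .
  have "transpose ?h = transpose ?h ** (?g ** ?h)" using ginv_mult(2)[OF sp] by simp
  also have "\<dots> = ?h" by (simp add: matrix_mul_assoc l)
  finally have "transpose ?h $ j $ i = ?h $ j $ i" by simp
  then show ?thesis by (simp add: transpose_def)
qed

lemma quad_ginv_nonneg: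
  assumes sp: "spacelike_at X y" shows "quad (ginv X y) x \<ge> 0"
proof -
  let ?g = "gmat X y" and ?h = "ginv X y"
  define c where "c = ?h *v x"
  have x: "x = ?g *v c" unfolding c_def by (simp add: matrix_vector_mul_assoc ginv_mult(2)[OF sp])
  have "quad ?h x = x \<bullet> c" by (simp add: quad_eq_inner c_def)
  also have "\<dots> = c \<bullet> (?g *v c)"
    unfolding x by (simp add: inner_commute)
  also have "\<dots> = quad ?g c" by (simp add: quad_eq_inner)
  finally show ?thesis using quad_gmat_nonneg[OF sp] by simp
qed

lemma tproj_eq_sum: "tproj X y v = (\<Sum>i\<in>UNIV. (\<Sum>j\<in>UNIV. ginv X y $ i $ j * mink v (dX X j y)) *\<^sub>R dX X
  i y)"
  by (simp add: tproj_def scaleR_sum_left)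

lemma mink_tproj_dX:
  assumes sp: "spacelike_at X y"
  shows "mink (tproj X y v) (dX X k y) = mink v (dX X k y)"
proof -
  have "mink (tproj X y v) (dX X k y) = (\<Sum>i\<in>UNIV. \<Sum>j\<in>UNIV. ginv X y $ i $ j * mink v (dX X j y) *
      gmat X y $ i $ k)"
    by (simp add: tproj_def mink_simps gmat_def)
  also have "\<dots> = (\<Sum>j\<in>UNIV. mink v (dX X j y) * (\<Sum>i\<in>UNIV. ginv X y $ j $ i * gmat X y $ i $ k))"
    by (subst sum.swap) (simp add: sum_distrib_left ginv_sym[OF sp] mult.commute mult.left_commute)
  also have "\<dots> = mink v (dX X k y)" by (simp add: ginv_gmat_entry[OF sp])
  finally show ?thesis .
qed

lemma mink_nproj_dX: "spacelike_at X y \<Longrightarrow> mink (nproj X y v) (dX X k y) = 0"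
  by (simp add: nproj_def mink_diff_left mink_tproj_dX)

lemma mink_nproj_span: "spacelike_at X y \<Longrightarrow> mink (nproj X y v) (\<Sum>k\<in>UNIV. c k *\<^sub>R dX X k y) = 0"
  by (simp add: mink_sum_right mink_scaleR_right mink_nproj_dX)

lemma mink_span_nproj: "spacelike_at X y \<Longrightarrow> mink (\<Sum>k\<in>UNIV. c k *\<^sub>R dX X k y) (nproj X y v) = 0"
  by (subst mink_sym) (rule mink_nproj_span)

lemma mink_tangent_nonneg: "spacelike_at X y \<Longrightarrow> mink (\<Sum>k\<in>UNIV. c k *\<^sub>R dX X k y) (\<Sum>k\<in>UNIV. c k *\<^sub>R dX X
  k y) \<ge> 0"
  using mink_tangent_eq_quad_gmat[of "\<chi> k. c k" X y] quad_gmat_nonneg[of X y "\<chi> k. c k"] by simp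

lemma mink_normal_nonpos:
  fixes X :: "'n::finite par \<Rightarrow> ('n, 'm::finite) amb"
  assumes sp: "spacelike_at X y" and w: "\<And>k. mink w (dX X k y) = 0"
  shows "mink w w \<le> 0"
proof -
  define f where "f c = fst (\<Sum>i\<in>UNIV. (c::real^'n) $ i *\<^sub>R dX X i y)" for c
  have lin: "linear f"
  proof (rule linearI)
    show "f (b + c) = f b + f c" for b c by (simp add: f_def scaleR_add_left sum.distrib)
    show "f (r *\<^sub>R c) = r *\<^sub>R f c" for r c
    proof -
      have "(\<Sum>i\<in>UNIV. (r * c $ i) *\<^sub>R dX X i y) = r *\<^sub>R (\<Sum>i\<in>UNIV. c $ i *\<^sub>R dX X i y)"
        by (simp add: scaleR_sum_right)
      then show ?thesis by (simp add: f_def)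
    qed
  qed
  have inj: "inj f"
  proof (rule linear_injective_0[OF lin, THEN iffD2], intro allI impI)
    fix c assume "f c = 0"
    then have "mink (\<Sum>i\<in>UNIV. c $ i *\<^sub>R dX X i y) (\<Sum>i\<in>UNIV. c $ i *\<^sub>R dX X i y) \<le> 0"
      by (simp add: mink_def f_def)
    then show "c = 0" using sp unfolding spacelike_at_def by force
  qed
  from surjD[OF linear_inj_imp_surj[OF lin inj], of "fst w"] obtain c where c: "f c = fst w" by auto
  define \<tau> where "\<tau> = (\<Sum>i\<in>UNIV. c $ i *\<^sub>R dX X i y)"
  have fst0: "fst (w - \<tau>) = 0" using c by (simp add: f_def \<tau>_def)
  have u: "mink (w - \<tau>) (w - \<tau>) \<le> 0" using fst0 by (simp add: mink_def)
  have wt: "mink w \<tau> = 0" by (simp add: \<tau>_def mink_sum_right mink_scaleR_right w)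
  have tt: "mink \<tau> \<tau> \<ge> 0" unfolding \<tau>_def using mink_tangent_nonneg[OF sp, of "\<lambda>i. c $ i"] by simp
  have "mink (w - \<tau>) (w - \<tau>) = mink w w - 2 * mink w \<tau> + mink \<tau> \<tau>"
    by (simp add: mink_simps mink_sym[of \<tau> w])
  then show ?thesis using u wt tt by simp
qed

lemma neg_mink_nproj_ge:
  fixes X :: "'n::finite par \<Rightarrow> ('n, 'm::finite) amb"
  assumes sp: "spacelike_at X y"
  shows "- mink (nproj X y v) (nproj X y v) \<ge> - mink (v + (\<Sum>k\<in>UNIV. c k *\<^sub>R dX X k y)) (v + (\<Sum>k\<in>UNIV.
      c k *\<^sub>R dX X k y))"
proof -
  define d where "d i = (\<Sum>j\<in>UNIV. ginv X y $ i $ j * mink v (dX X j y)) + c i" for i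
  define \<sigma> where "\<sigma> = (\<Sum>k\<in>UNIV. d k *\<^sub>R dX X k y)"
  have dec: "v + (\<Sum>k\<in>UNIV. c k *\<^sub>R dX X k y) = nproj X y v + \<sigma>"
    by (simp add: nproj_def tproj_eq_sum \<sigma>_def d_def scaleR_add_left sum.distrib)
  have "mink (nproj X y v + \<sigma>) (nproj X y v + \<sigma>) = mink (nproj X y v) (nproj X y v) + mink \<sigma> \<sigma>"
    using mink_nproj_span[OF sp, of v d] mink_span_nproj[OF sp, of d v]
    by (simp add: mink_add_left mink_add_right \<sigma>_def)
  moreover have "mink \<sigma> \<sigma> \<ge> 0" unfolding \<sigma>_def by (rule mink_tangent_nonneg[OF sp])
  ultimately show ?thesis unfolding dec by simp
qed



lemma ginv_cramer:
  assumes spy: "spacelike_at X y"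
  shows "ginv X y $ k $ j = det (\<chi> i l. if l = k then (if i = j then 1 else 0) else gmat X y $ i $
      l) / det (gmat X y)"
proof -
  have d0: "det (gmat X y) \<noteq> 0" using gmat_invertible[OF spy] invertible_det_nz by blast
  let ?b = "axis j (1::real)"
  have "gmat X y *v (ginv X y *v ?b) = ?b"
    by (simp add: matrix_vector_mul_assoc ginv_mult(2)[OF spy])
  then have "ginv X y *v ?b = (\<chi> k. det (\<chi> i l. if l = k then ?b $ i else gmat X y $ i $ l) / det
      (gmat X y))"
    using cramer[OF d0] by blast
  then have "(ginv X y *v ?b) $ k = det (\<chi> i l. if l = k then ?b $ i else gmat X y $ i $ l) / det
      (gmat X y)"
    by simp
  moreover have "(ginv X y *v ?b) $ k = ginv X y $ k $ j"
    by (simp add: matrix_vector_mult_def axis_def if_distrib cong: if_cong)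
  moreover have "(\<chi> i l. if l = k then ?b $ i else gmat X y $ i $ l) = (\<chi> i l. if l = k then (if i =
      j then 1 else 0) else gmat X y $ i $ l)"
    by (simp add: vec_eq_iff axis_def)
  ultimately show ?thesis by simp
qed

section \<open>Positive semidefinite forms\<close>

lemma affine_nonneg_imp_zero:
  fixes b c :: real
  assumes "\<And>t. 0 \<le> t * b + c"
  shows "b = 0"
proof (rule ccontr)
  assume "b \<noteq> 0"
  then have "- (\<bar>c\<bar> + 1) / b * b + c = c - (\<bar>c\<bar> + 1)" by simp
  then show False using assms[of "- (\<bar>c\<bar> + 1) / b"] by linarith
qed

lemma quadratic_nonpos_discriminant:
  fixes a b c :: real
  assumes a: "a \<le> 0" and q: "\<And>t. a * t\<^sup>2 + 2 * b * t + c \<le> 0"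
  shows "b\<^sup>2 \<le> a * c"
proof (cases "a = 0")
  case True
  have "0 \<le> t * (- 2 * b) + - c" for t using q[of t] True by (simp add: algebra_simps)
  then have "b = 0" using affine_nonneg_imp_zero[of "- 2 * b" "- c"] by simp
  then show ?thesis using True by simp
next
  case False
  then have "a < 0" using a by simp
  moreover have "a * (- b / a)\<^sup>2 + 2 * b * (- b / a) + c \<le> 0" by (rule q)
  ultimately have "c \<le> b\<^sup>2 / a" by (simp add: power2_eq_square field_simps)
  then have "a * (b\<^sup>2 / a) \<le> a * c" using \<open>a < 0\<close> by (intro mult_left_mono_neg) auto
  then show ?thesis using \<open>a < 0\<close> by simp
qed

lemma quad_form_insert:
  fixes M :: "'i \<Rightarrow> 'i \<Rightarrow> real"
  assumes K: "finite K" "k \<notin> K" and sym: "\<And>i j. M i j = M j i"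
  shows "(\<Sum>i\<in>insert k K. \<Sum>j\<in>insert k K. x i * x j * M i j)
       = (x k)\<^sup>2 * M k k + 2 * x k * (\<Sum>j\<in>K. x j * M k j) + (\<Sum>i\<in>K. \<Sum>j\<in>K. x i * x j * M i j)"
proof -
  have "(\<Sum>i\<in>K. x i * x k * M i k) = (\<Sum>j\<in>K. x k * x j * M k j)"
    by (intro sum.cong refl) (simp only: sym[of _ k] mult.commute)
  then show ?thesis
    using K by (simp add: sum.distrib sum_distrib_left power2_eq_square algebra_simps)
qed

lemma psd_row_vanishes:
  fixes M :: "'i \<Rightarrow> 'i \<Rightarrow> real"
  assumes K: "finite K" "k \<notin> K" and j: "j \<in> K" and Mkk: "M k k = 0"
    and psd: "\<And>x. 0 \<le> (x k)\<^sup>2 * M k k + 2 * x k * (\<Sum>j\<in>K. x j * M k j) + (\<Sum>i\<in>K. \<Sum>j\<in>K. x i * x j * M i j)"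
  shows "M k j = 0"
proof -
  have "0 \<le> t * (2 * M k j) + M j j" for t
  proof -
    define x where "x i = (if i = k then t else if i = j then 1 else 0)" for i
    have xK: "x l = (if l = j then 1 else 0)" if "l \<in> K" for l using K(2) that by (auto simp: x_def)
    have "(\<Sum>l\<in>K. x l * M k l) = (\<Sum>l\<in>K. if l = j then M k l else 0)"
      by (rule sum.cong) (auto simp: xK)
    moreover have "(\<Sum>i\<in>K. \<Sum>l\<in>K. x i * x l * M i l)
        = (\<Sum>i\<in>K. if i = j then (\<Sum>l\<in>K. if l = j then M i l else 0) else 0)"
      by (rule sum.cong) (auto simp: xK intro!: sum.cong)
    ultimately have "(\<Sum>l\<in>K. x l * M k l) = M k j" "(\<Sum>i\<in>K. \<Sum>l\<in>K. x i * x l * M i l) = M j j"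
      using j K(1) by simp_all
    then show ?thesis using psd[of x] Mkk by (simp add: x_def algebra_simps)
  qed
  then show ?thesis using affine_nonneg_imp_zero[of "2 * M k j" "M j j"] by simp
qed

text \<open>One step of a Cholesky-type factorisation: split off the rank-one form
  \<open>x \<mapsto> (\<Sum>j. q j * x j)\<^sup>2\<close> through the row of \<open>k\<close>, leaving a semidefinite form on \<open>K\<close>.\<close>

lemma psd_split_row:
  fixes M :: "'i \<Rightarrow> 'i \<Rightarrow> real"
  assumes K: "finite K" "k \<notin> K"
    and psd: "\<And>x. 0 \<le> (x k)\<^sup>2 * M k k + 2 * x k * (\<Sum>j\<in>K. x j * M k j) + (\<Sum>i\<in>K. \<Sum>j\<in>K. x i * x j * M i j)"
  obtains q where "\<And>j. j \<in> insert k K \<Longrightarrow> M k j = q k * q j"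
    "\<And>x. 0 \<le> (\<Sum>i\<in>K. \<Sum>j\<in>K. x i * x j * (M i j - q i * q j))"
proof (cases "M k k > 0")
  case True
  define q where "q i = M k i / sqrt (M k k)" for i
  have row: "M k j = q k * q j" for j using True by (simp add: q_def real_div_sqrt)
  have "0 \<le> (\<Sum>i\<in>K. \<Sum>j\<in>K. x i * x j * (M i j - q i * q j))" for x
  proof -
    define b where "b = (\<Sum>j\<in>K. x j * M k j)"
    define x' where "x' i = (if i = k then - b / M k k else x i)" for i
    have "(\<Sum>j\<in>K. x' j * M k j) = b" "(\<Sum>i\<in>K. \<Sum>j\<in>K. x' i * x' j * M i j) = (\<Sum>i\<in>K. \<Sum>j\<in>K. x i * x j * M
        i j)"
      unfolding b_def x'_def using K(2) by (auto intro!: sum.cong)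
    then have "0 \<le> (- b / M k k)\<^sup>2 * M k k + 2 * (- b / M k k) * b + (\<Sum>i\<in>K. \<Sum>j\<in>K. x i * x j * M i j)"
      using psd[of x'] by (simp add: x'_def)
    then have "0 \<le> (\<Sum>i\<in>K. \<Sum>j\<in>K. x i * x j * M i j) - b\<^sup>2 / M k k"
      using True by (simp add: power2_eq_square field_simps)
    moreover have "(\<Sum>i\<in>K. x i * q i) = b / sqrt (M k k)"
      unfolding b_def q_def by (simp add: sum_divide_distrib mult.commute)
    moreover have "(\<Sum>i\<in>K. \<Sum>j\<in>K. x i * x j * (M i j - q i * q j))
        = (\<Sum>i\<in>K. \<Sum>j\<in>K. x i * x j * M i j) - (\<Sum>i\<in>K. x i * q i) * (\<Sum>j\<in>K. x j * q j)"
      by (simp add: right_diff_distrib sum_subtractf sum_distrib_left sum_distrib_right algebra_simps)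
    ultimately show ?thesis using True by (simp add: power2_eq_square)
  qed
  then show ?thesis using that[of q] row by blast
next
  case False
  have "(\<Sum>j\<in>K. (if j = k then 1 else 0) * M k j) = 0"
    "(\<Sum>i\<in>K. \<Sum>j\<in>K. (if i = k then 1 else 0) * (if j = k then 1 else 0) * M i j) = 0"
    using K(2) by (auto intro!: sum.neutral)
  then have Mkk: "M k k = 0" using psd[of "\<lambda>i. if i = k then 1 else 0"] False by simp
  have "0 \<le> (\<Sum>i\<in>K. \<Sum>j\<in>K. x i * x j * (M i j - 0 * 0))" for x
  proof -
    have "(\<Sum>i\<in>K. \<Sum>j\<in>K. (if i = k then 0 else x i) * (if j = k then 0 else x j) * M i j)
        = (\<Sum>i\<in>K. \<Sum>j\<in>K. x i * x j * M i j)"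
      using K(2) by (intro sum.cong) auto
    then show ?thesis using psd[of "\<lambda>i. if i = k then 0 else x i"] by simp
  qed
  then show ?thesis using that[of "\<lambda>_. 0"] Mkk psd_row_vanishes[OF K _ Mkk psd] by auto
qed

lemma psd_gram_decomp:
  fixes M :: "'i \<Rightarrow> 'i \<Rightarrow> real"
  assumes "finite K" "\<And>i j. M i j = M j i" "\<And>x. (\<Sum>i\<in>K. \<Sum>j\<in>K. x i * x j * M i j) \<ge> 0"
  shows "\<exists>p. \<forall>i\<in>K. \<forall>j\<in>K. M i j = (\<Sum>a\<in>K. p a i * p a j)"
  using assms
proof (induction K arbitrary: M rule: finite_induct)
  case empty then show ?case by simp
next
  case (insert k K)
  have "0 \<le> (x k)\<^sup>2 * M k k + 2 * x k * (\<Sum>j\<in>K. x j * M k j) + (\<Sum>i\<in>K. \<Sum>j\<in>K. x i * x j * M i j)" for x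
    using insert.prems(2)[of x] unfolding quad_form_insert[OF insert.hyps insert.prems(1)] .
  then obtain q where q: "\<And>j. j \<in> insert k K \<Longrightarrow> M k j = q k * q j"
    and psd: "\<And>x. 0 \<le> (\<Sum>i\<in>K. \<Sum>j\<in>K. x i * x j * (M i j - q i * q j))"
    by (rule psd_split_row[OF insert.hyps]) blast
  have "M i j - q i * q j = M j i - q j * q i" for i j using insert.prems(1)[of i j] by simp
  then obtain p where p: "\<And>i j. i \<in> K \<Longrightarrow> j \<in> K \<Longrightarrow> M i j - q i * q j = (\<Sum>a\<in>K. p a i * p a j)"
    using insert.IH[of "\<lambda>i j. M i j - q i * q j"] psd by blast
  define p' where "p' a i = (if a = k then q i else if i = k then 0 else p a i)" for a i
  have "M i j = (\<Sum>a\<in>insert k K. p' a i * p' a j)" if ij: "i \<in> insert k K" "j \<in> insert k K" for i j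
  proof -
    have "(\<Sum>a\<in>K. p' a i * p' a j) = (if i = k \<or> j = k then 0 else M i j - q i * q j)"
    proof (cases "i = k \<or> j = k")
      case True
      then show ?thesis using insert.hyps(2) by (auto simp: p'_def intro!: sum.neutral)
    next
      case False
      have "(\<Sum>a\<in>K. p' a i * p' a j) = (\<Sum>a\<in>K. p a i * p a j)"
        using insert.hyps(2) False by (intro sum.cong) (auto simp: p'_def)
      then show ?thesis using False p[of i j] ij by simp
    qed
    then have "(\<Sum>a\<in>insert k K. p' a i * p' a j) = q i * q j + (if i = k \<or> j = k then 0 else M i j -
        q i * q j)"
      using insert.hyps by (simp add: p'_def)
    moreover have "M i j = q i * q j" if "i = k \<or> j = k"
      using that q[OF ij(1)] q[OF ij(2)] insert.prems(1)[of i j] by auto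
    ultimately show ?thesis by simp
  qed
  then show ?case by blast
qed

lemma sum_rotate3: "(\<Sum>i\<in>I. \<Sum>j\<in>J. \<Sum>k\<in>K. g i j k) = (\<Sum>k\<in>K. \<Sum>i\<in>I. \<Sum>j\<in>J. g i j k)"
  by (subst sum.swap) (rule sum.swap)

lemma sum_reverse3: "(\<Sum>i\<in>I. \<Sum>j\<in>J. \<Sum>k\<in>K. g i j k) = (\<Sum>k\<in>K. \<Sum>j\<in>J. \<Sum>i\<in>I. g i j k)"
  unfolding sum_rotate3[of _ I] by (rule sum.cong[OF refl]) (rule sum.swap)

lemma quadratic_cross_bound:
  fixes W s Zs Bs K P u :: real
  assumes s: "s \<ge> 0" and W: "W = 1 + s" and Zs: "Zs \<ge> 0" and Bs: "Bs \<ge> 0" and K: "K \<ge> 0"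
    and i: "P\<^sup>2 \<le> s * K" and ii: "K \<le> s * Bs" and iii: "K \<le> W * Zs"
  shows "8 * u * P \<le> 2 * Zs + 2 * Bs + 4 * u\<^sup>2 * W * s"
proof (cases "s = 0")
  case True
  then have "P = 0" using i by simp
  then show ?thesis using Zs Bs True by simp
next
  case False
  then have sp: "s > 0" using s by simp
  have Wp: "W > 0" using W s by simp
  have "W * s * (2 * Zs) \<ge> 2 * s * K" using iii sp by (simp add: mult_left_mono mult_ac)
  moreover have "W * s * (2 * Bs) \<ge> 2 * W * K" using ii Wp by (simp add: mult_left_mono mult_ac)
  moreover have "2 * W * K \<ge> 2 * s * K" using W K by (simp add: mult_right_mono)
  moreover have "4 * s * K \<ge> 4 * P\<^sup>2" using i by simp
  ultimately have "W * s * (2 * Zs + 2 * Bs) - 4 * P\<^sup>2 \<ge> 0" by (simp add: algebra_simps)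
  moreover have "W * s * (2 * Zs + 2 * Bs + 4 * u\<^sup>2 * W * s - 8 * u * P) = (2 * u * W * s - 2 * P)\<^sup>2 +
      (W * s * (2 * Zs + 2 * Bs) - 4 * P\<^sup>2)"
    by (simp add: power2_eq_square algebra_simps)
  ultimately have "W * s * (2 * Zs + 2 * Bs + 4 * u\<^sup>2 * W * s - 8 * u * P) \<ge> 0" by simp
  then have "2 * Zs + 2 * Bs + 4 * u\<^sup>2 * W * s - 8 * u * P \<ge> 0"
    using mult_pos_pos[OF Wp sp] by (simp add: zero_le_mult_iff)
  then show ?thesis by simp
qed

lemma sum_gram_form:
  fixes p :: "'a \<Rightarrow> 'b \<Rightarrow> real"
  shows "(\<Sum>i\<in>I. \<Sum>j\<in>J. (\<Sum>a\<in>K. p a i * p a j) * F i * G j) = (\<Sum>a\<in>K. (\<Sum>i\<in>I. p a i * F i) * (\<Sum>j\<in>J. p a j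
      * G j))"
proof -
  have "(\<Sum>i\<in>I. \<Sum>j\<in>J. (\<Sum>a\<in>K. p a i * p a j) * F i * G j) = (\<Sum>i\<in>I. \<Sum>j\<in>J. \<Sum>a\<in>K. p a i * F i * (p a j *
      G j))"
    by (simp add: sum_distrib_left sum_distrib_right mult_ac)
  also have "\<dots> = (\<Sum>i\<in>I. \<Sum>a\<in>K. \<Sum>j\<in>J. p a i * F i * (p a j * G j))"
    by (rule sum.cong[OF refl], rule sum.swap)
  also have "\<dots> = (\<Sum>a\<in>K. \<Sum>i\<in>I. \<Sum>j\<in>J. p a i * F i * (p a j * G j))" by (rule sum.swap)
  also have "\<dots> = (\<Sum>a\<in>K. (\<Sum>i\<in>I. p a i * F i) * (\<Sum>j\<in>J. p a j * G j))"
    by (simp add: sum_product)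
  finally show ?thesis .
qed

lemma sum_gram_form_mink:
  fixes p :: "'a \<Rightarrow> 'b \<Rightarrow> real"
  shows "(\<Sum>i\<in>I. \<Sum>j\<in>J. (\<Sum>a\<in>K. p a i * p a j) * mink (F i) (G j)) = (\<Sum>a\<in>K. mink (\<Sum>i\<in>I. p a i *\<^sub>R F i)
      (\<Sum>j\<in>J. p a j *\<^sub>R G j))"
proof -
  have "(\<Sum>i\<in>I. \<Sum>j\<in>J. (\<Sum>a\<in>K. p a i * p a j) * mink (F i) (G j)) = (\<Sum>i\<in>I. \<Sum>j\<in>J. \<Sum>a\<in>K. p a i * p a j *
      mink (F i) (G j))"
    by (simp add: sum_distrib_right)
  also have "\<dots> = (\<Sum>i\<in>I. \<Sum>a\<in>K. \<Sum>j\<in>J. p a i * p a j * mink (F i) (G j))"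
    by (rule sum.cong[OF refl], rule sum.swap)
  also have "\<dots> = (\<Sum>a\<in>K. \<Sum>i\<in>I. \<Sum>j\<in>J. p a i * p a j * mink (F i) (G j))" by (rule sum.swap)
  also have "\<dots> = (\<Sum>a\<in>K. mink (\<Sum>i\<in>I. p a i *\<^sub>R F i) (\<Sum>j\<in>J. p a j *\<^sub>R G j))"
    by (simp add: mink_sum_sum)
  finally show ?thesis .
qed

section \<open>Second-order conditions at a minimum\<close>

lemma local_min_pd_zero:
  fixes h :: "'a::euclidean_space \<Rightarrow> real"
  assumes h: "smooth_on S h" and z: "z \<in> S" and min: "\<forall>y\<in>S. h z \<le> h y"
  shows "pd h v z = 0"
proof -
  obtain d where d: "d > 0" "\<And>s. \<bar>s\<bar> < d \<Longrightarrow> z + s *\<^sub>R v \<in> S"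
    using line_in_open[OF smooth_on_open[OF h] z] by blast
  have "((\<lambda>s. h (z + s *\<^sub>R v)) has_real_derivative pd h v z) (at 0)"
    using smooth_on_DERIV_line[OF h, of z 0 v] z by simp
  then show ?thesis by (rule DERIV_local_min[OF _ d(1)]) (use d min in auto)
qed

lemma local_min_pd_pd_nonneg:
  fixes h :: "'a::euclidean_space \<Rightarrow> real"
  assumes h: "smooth_on S h" and z: "z \<in> S" and min: "\<forall>y\<in>S. h z \<le> h y"
  shows "pd (pd h v) v z \<ge> 0"
proof (rule ccontr)
  assume neg: "\<not> pd (pd h v) v z \<ge> 0"
  obtain d where d: "d > 0" "\<And>s. \<bar>s\<bar> < d \<Longrightarrow> z + s *\<^sub>R v \<in> S"
    using line_in_open[OF smooth_on_open[OF h] z] by blast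
  have "((\<lambda>s. pd h v (z + s *\<^sub>R v)) has_real_derivative pd (pd h v) v z) (at 0)"
    using smooth_on_has_dir_deriv_iterpd[OF h z, of "[v]" v] by (simp add: has_dir_deriv_real_iff)
  from DERIV_neg_dec_right[OF this] neg obtain d2
    where d2: "d2 > 0" "\<forall>t>0. t < d2 \<longrightarrow> pd h v (z + (0 + t) *\<^sub>R v) < pd h v (z + 0 *\<^sub>R v)"
    by auto
  define s where "s = min d d2 / 2"
  have s: "0 < s" "s < d" "s < d2" using d d2 by (auto simp: s_def)
  have "((\<lambda>s. h (z + s *\<^sub>R v)) has_real_derivative pd h v (z + t *\<^sub>R v)) (at t)" if "0 \<le> t" "t \<le> s" for t
    using smooth_on_DERIV_line[OF h d(2)] that s by simp
  from MVT2[OF s(1) this] obtain \<sigma>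
    where \<sigma>: "0 < \<sigma>" "\<sigma> < s" "h (z + s *\<^sub>R v) - h (z + 0 *\<^sub>R v) = (s - 0) * pd h v (z + \<sigma> *\<^sub>R v)"
    by blast
  have "pd h v (z + \<sigma> *\<^sub>R v) < 0"
    using d2(2) \<sigma> s local_min_pd_zero[OF h z min] by simp
  then have "s * pd h v (z + \<sigma> *\<^sub>R v) < 0" using s(1) by (rule mult_pos_neg[rotated])
  then have "h (z + s *\<^sub>R v) < h z" using \<sigma>(3) by simp
  moreover have "z + s *\<^sub>R v \<in> S" using d s by auto
  ultimately show False using min by force
qed

lemma pd_pd_sum_dir:
  fixes h :: "'a::euclidean_space \<Rightarrow> real" and u :: "'n::finite \<Rightarrow> 'a"
  assumes h: "smooth_on S h" and z: "z \<in> S"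
  shows "pd (pd h (\<Sum>i\<in>UNIV. p i *\<^sub>R u i)) (\<Sum>i\<in>UNIV. p i *\<^sub>R u i) z
    = (\<Sum>i\<in>UNIV. \<Sum>j\<in>UNIV. p i * p j * pd (pd h (u j)) (u i) z)"
proof -
  let ?P = "\<Sum>i\<in>UNIV. p i *\<^sub>R u i"
  have "pd (pd h ?P) ?P z = pd (\<lambda>y. \<Sum>j\<in>UNIV. p j * pd h (u j) y) ?P z"
    by (rule pd_cong_open[OF smooth_on_open[OF h] z]) (simp add: pd_sum_dir[OF h])
  also have "\<dots> = (\<Sum>j\<in>UNIV. p j * pd (pd h (u j)) ?P z)"
    by (rule pd_eqI, rule has_dir_deriv_eq_rhs[OF has_dir_deriv_sum[OF finite has_dir_deriv_mult[OF
        has_dir_deriv_const]]])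
      (use smooth_on_has_dir_deriv_iterpd[OF h z, of "[u _]" ?P] in simp_all)
  also have "\<dots> = (\<Sum>j\<in>UNIV. p j * (\<Sum>i\<in>UNIV. p i * pd (pd h (u j)) (u i) z))"
  proof -
    have "pd (pd h (u j)) ?P z = (\<Sum>i\<in>UNIV. p i * pd (pd h (u j)) (u i) z)" for j
      using pd_sum_dir[OF smooth_on_iterpd[OF h, of "[u j]"] z finite, of p u] by simp
    then show ?thesis by simp
  qed
  also have "\<dots> = (\<Sum>i\<in>UNIV. \<Sum>j\<in>UNIV. p i * p j * pd (pd h (u j)) (u i) z)"
    by (subst sum.swap) (simp add: sum_distrib_left mult_ac)
  finally show ?thesis .
qed

text \<open>A trace of the Hessian against a semidefinite matrix is a sum of second derivatives along
  the rows of a Gram factor.\<close>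

lemma local_min_trace_nonneg:
  fixes h :: "'a::euclidean_space \<Rightarrow> real" and M :: "real^'n::finite^'n" and u :: "'n \<Rightarrow> 'a"
  assumes h: "smooth_on S h" and z: "z \<in> S" and min: "\<forall>y\<in>S. h z \<le> h y"
    and M_sym: "\<And>i j. M $ i $ j = M $ j $ i" and M_psd: "\<And>x. quad M x \<ge> 0"
  shows "(\<Sum>i\<in>UNIV. \<Sum>j\<in>UNIV. M $ i $ j * pd (pd h (u j)) (u i) z) \<ge> 0"
proof -
  have "0 \<le> (\<Sum>i\<in>UNIV. \<Sum>j\<in>UNIV. x i * x j * M $ i $ j)" for x
    using M_psd[of "\<chi> i. x i"] by (simp add: quad_def)
  then obtain p :: "'n \<Rightarrow> 'n \<Rightarrow> real" where p: "\<And>i j. M $ i $ j = (\<Sum>a\<in>UNIV. p a i * p a j)"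
    using psd_gram_decomp[of "UNIV::'n set" "\<lambda>i j. M $ i $ j"] M_sym by auto
  have "(\<Sum>i\<in>UNIV. \<Sum>j\<in>UNIV. M $ i $ j * pd (pd h (u j)) (u i) z)
      = (\<Sum>a\<in>UNIV. \<Sum>i\<in>UNIV. \<Sum>j\<in>UNIV. p a i * p a j * pd (pd h (u j)) (u i) z)"
    unfolding p
    by (simp add: sum_distrib_right) (subst sum.swap, rule sum.cong[OF refl], subst sum.swap, simp)
  also have "\<dots> \<ge> 0"
    using local_min_pd_pd_nonneg[OF h z min] by (simp add: pd_pd_sum_dir[OF h z, symmetric] sum_nonneg)
  finally show ?thesis .
qed

section \<open>The heat operator\<close>

lemma pd_mult_exp_square:
  fixes \<phi> u :: "'a::euclidean_space \<Rightarrow> real"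
  assumes \<phi>: "smooth_on S \<phi>" and u: "smooth_on S u" and y: "y \<in> S"
  shows "pd (\<lambda>y. \<phi> y * exp ((u y)\<^sup>2)) w y = exp ((u y)\<^sup>2) * (pd \<phi> w y + 2 * u y * \<phi> y * pd u w y)"
  by (rule pd_eqI, rule has_dir_deriv_eq_rhs[OF has_dir_deriv_mult[OF smooth_on_has_dir_deriv[OF \<phi> y]
        has_dir_deriv_exp[OF has_dir_deriv_power2[OF smooth_on_has_dir_deriv[OF u y]]]]])
    (simp add: algebra_simps)

lemma pd_pd_mult_exp_square:
  fixes \<phi> u :: "'a::euclidean_space \<Rightarrow> real"
  assumes \<phi>: "smooth_on S \<phi>" and u: "smooth_on S u" and z: "z \<in> S"
  shows "pd (pd (\<lambda>y. \<phi> y * exp ((u y)\<^sup>2)) w) v z = exp ((u z)\<^sup>2) *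
    (pd (pd \<phi> w) v z + 2 * u z * pd u v z * pd \<phi> w z + 2 * u z * pd u w z * pd \<phi> v z
     + \<phi> z * (2 * pd u v z * pd u w z + 2 * u z * pd (pd u w) v z + 4 * (u z)\<^sup>2 * pd u v z * pd u w z))"
proof -
  have "pd (pd (\<lambda>y. \<phi> y * exp ((u y)\<^sup>2)) w) v z
      = pd (\<lambda>y. exp ((u y)\<^sup>2) * (pd \<phi> w y + 2 * u y * \<phi> y * pd u w y)) v z"
    by (rule pd_cong_open[OF smooth_on_open[OF \<phi>] z]) (simp add: pd_mult_exp_square[OF \<phi> u])
  also have "\<dots> = exp ((u z)\<^sup>2) * (2 * u z * pd u v z) * (pd \<phi> w z + 2 * u z * \<phi> z * pd u w z)
      + exp ((u z)\<^sup>2) * (pd (pd \<phi> w) v z + (((0 * u z + 2 * pd u v z) * \<phi> z + 2 * u z * pd \<phi> v z) *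
          pd u w z
          + 2 * u z * \<phi> z * pd (pd u w) v z))"
  proof (rule pd_eqI, rule has_dir_deriv_mult)
    show "has_dir_deriv (\<lambda>y. exp ((u y)\<^sup>2)) v z (exp ((u z)\<^sup>2) * (2 * u z * pd u v z))"
      by (rule has_dir_deriv_exp[OF has_dir_deriv_power2[OF smooth_on_has_dir_deriv[OF u z]]])
    have "has_dir_deriv (pd \<phi> w) v z (pd (pd \<phi> w) v z)" "has_dir_deriv (pd u w) v z (pd (pd u w) v z)"
      using smooth_on_has_dir_deriv_iterpd[OF \<phi> z, of "[w]"] smooth_on_has_dir_deriv_iterpd[OF u z,
          of "[w]"]
      by simp_all
    then show "has_dir_deriv (\<lambda>y. pd \<phi> w y + 2 * u y * \<phi> y * pd u w y) v z
        (pd (pd \<phi> w) v z + (((0 * u z + 2 * pd u v z) * \<phi> z + 2 * u z * pd \<phi> v z) * pd u w z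
          + 2 * u z * \<phi> z * pd (pd u w) v z))"
      by (intro has_dir_deriv_add has_dir_deriv_mult has_dir_deriv_const
          smooth_on_has_dir_deriv[OF u z] smooth_on_has_dir_deriv[OF \<phi> z])
  qed
  finally show ?thesis by (simp add: power2_eq_square algebra_simps)
qed

lemma heat_op_mult_exp_square:
  fixes X :: "'n::finite par \<Rightarrow> ('n, 'm::finite) amb" and \<phi> u :: "'n par \<Rightarrow> real"
  assumes \<phi>: "smooth_on S \<phi>" and u: "smooth_on S u" and z: "z \<in> S"
    and sym: "\<And>i j. ginv X z $ i $ j = ginv X z $ j $ i"
  shows "ddt (\<lambda>y. \<phi> y * exp ((u y)\<^sup>2)) z - lapl X (\<lambda>y. \<phi> y * exp ((u y)\<^sup>2)) z
    = exp ((u z)\<^sup>2) * ((ddt \<phi> z - lapl X \<phi> z) + 2 * u z * \<phi> z * (ddt u z - lapl X u z)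
       - 2 * \<phi> z * (1 + 2 * (u z)\<^sup>2) * (\<Sum>i\<in>UNIV. \<Sum>j\<in>UNIV. ginv X z $ i $ j * pd u (dirx i) z * pd u
           (dirx j) z)
       - 4 * u z * (\<Sum>i\<in>UNIV. \<Sum>j\<in>UNIV. ginv X z $ i $ j * pd u (dirx i) z * pd \<phi> (dirx j) z))"
proof -
  let ?F = "\<lambda>y. \<phi> y * exp ((u y)\<^sup>2)" and ?E = "exp ((u z)\<^sup>2)" and ?g = "\<lambda>i j. ginv X z $ i $ j"
  let ?\<Gamma> = "\<lambda>k i j. christoffel X k i j z"
  define \<phi>' u' where "\<phi>' i = pd \<phi> (dirx i) z" and "u' i = pd u (dirx i) z" for i
  have first: "pd ?F (dirx k) z = ?E * (\<phi>' k + 2 * u z * \<phi> z * u' k)" for k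
    by (simp add: pd_mult_exp_square[OF \<phi> u z] \<phi>'_def u'_def)
  have summand: "?g i j * (pd (pd ?F (dirx j)) (dirx i) z - (\<Sum>k\<in>UNIV. ?\<Gamma> k i j * pd ?F (dirx k) z))
     = ?E * (?g i j * (pd (pd \<phi> (dirx j)) (dirx i) z - (\<Sum>k\<in>UNIV. ?\<Gamma> k i j * \<phi>' k))
        + 2 * u z * \<phi> z * (?g i j * (pd (pd u (dirx j)) (dirx i) z - (\<Sum>k\<in>UNIV. ?\<Gamma> k i j * u' k)))
        + 2 * u z * (?g i j * u' i * \<phi>' j) + 2 * u z * (?g i j * u' j * \<phi>' i)
        + \<phi> z * (2 + 4 * (u z)\<^sup>2) * (?g i j * u' i * u' j))" for i j
    unfolding first pd_pd_mult_exp_square[OF \<phi> u z] \<phi>'_def u'_def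
    by (simp add: sum.distrib sum_distrib_left algebra_simps)
  have lapl: "lapl X ?F z = ?E * (lapl X \<phi> z + 2 * u z * \<phi> z * lapl X u z
      + 2 * u z * (\<Sum>i\<in>UNIV. \<Sum>j\<in>UNIV. ?g i j * u' i * \<phi>' j) + 2 * u z * (\<Sum>i\<in>UNIV. \<Sum>j\<in>UNIV. ?g i j *
          u' j * \<phi>' i)
      + \<phi> z * (2 + 4 * (u z)\<^sup>2) * (\<Sum>i\<in>UNIV. \<Sum>j\<in>UNIV. ?g i j * u' i * u' j))"
    unfolding lapl_def summand by (simp add: \<phi>'_def u'_def sum.distrib sum_distrib_left distrib_left)
  have "(\<Sum>i\<in>UNIV. \<Sum>j\<in>UNIV. ?g i j * u' j * \<phi>' i) = (\<Sum>i\<in>UNIV. \<Sum>j\<in>UNIV. ?g i j * u' i * \<phi>' j)"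
    by (subst sum.swap) (simp add: sym)
  moreover have "ddt ?F z = ?E * (ddt \<phi> z + 2 * u z * \<phi> z * ddt u z)"
    by (simp add: ddt_def pd_mult_exp_square[OF \<phi> u z])
  ultimately show ?thesis unfolding lapl by (simp add: \<phi>'_def u'_def algebra_simps)
qed

lemma heat_op_le_at_touching:
  fixes X :: "'n::finite par \<Rightarrow> ('n, 'm::finite) amb" and f \<psi> :: "'n par \<Rightarrow> real"
  assumes f: "smooth_on S f" and \<psi>: "smooth_on S \<psi>" and z: "z \<in> S" and spacelike: "spacelike_at X z"
    and below: "\<forall>y\<in>S. \<psi> y \<le> f y" and touch: "\<psi> z = f z"
  shows "ddt f z - lapl X f z \<le> ddt \<psi> z - lapl X \<psi> z"
proof -
  define h where "h y = f y - \<psi> y" for y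
  have h: "smooth_on S h" unfolding h_def[abs_def] by (rule smooth_on_diff[OF f \<psi>])
  have min: "\<forall>y\<in>S. h z \<le> h y" using below touch by (simp add: h_def[abs_def])
  have pd_h: "pd h v y = pd f v y - pd \<psi> v y" if "y \<in> S" for v y
    using iterpd_diff[OF f \<psi> that, of "[v]"] by (simp add: h_def[abs_def])
  have pd_pd_h: "pd (pd h w) v z = pd (pd f w) v z - pd (pd \<psi> w) v z" for v w
    using iterpd_diff[OF f \<psi> z, of "[v, w]"] by (simp add: h_def[abs_def])
  have t: "ddt f z = ddt \<psi> z" using local_min_pd_zero[OF h z min, of dirt] pd_h[OF z]
    by (simp add: ddt_def)
  have k: "pd f (dirx k) z = pd \<psi> (dirx k) z" for k
    using local_min_pd_zero[OF h z min, of "dirx k"] pd_h[OF z] by simp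
  have "0 \<le> (\<Sum>i\<in>UNIV. \<Sum>j\<in>UNIV. ginv X z $ i $ j * pd (pd h (dirx j)) (dirx i) z)"
    by (rule local_min_trace_nonneg[OF h z min]) (simp_all add: ginv_sym[OF spacelike]
        quad_ginv_nonneg[OF spacelike])
  also have "\<dots> = lapl X f z - lapl X \<psi> z"
    unfolding lapl_def pd_pd_h k by (simp add: sum_subtractf[symmetric] right_diff_distrib)
  finally show ?thesis using t by simp
qed

section \<open>Spacelike mean curvature flow\<close>

locale spacelike_mcf =
  fixes X :: "'n::finite par \<Rightarrow> ('n, 'm::finite) amb" and S :: "'n par set"
  assumes smooth: "smooth_on S X" and spacelike: "\<forall>y\<in>S. spacelike_at X y" and flow: "\<forall>y\<in>S. ddt X y =
      mcv X y"
begin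

lemma open_S: "open S" using smooth by (rule smooth_on_open)

lemma smooth_of_elementary: "elementary_on S X f \<Longrightarrow> smooth_on S f"
  by (rule elementary_on_smooth_on[OF smooth])

lemma has_dir_deriv_of_elementary: "elementary_on S X f \<Longrightarrow> y \<in> S \<Longrightarrow> has_dir_deriv f v y (pd f v y)"
  using smooth_on_has_dir_deriv[OF smooth_of_elementary] by blast

lemma dX_iterpd: "dX X i = iterpd X [dirx i]" by (simp add: dX_def[abs_def])

lemma has_dir_deriv_iterpd_X: "y \<in> S \<Longrightarrow> has_dir_deriv (iterpd X vs) v y (iterpd X (v # vs) y)"
  by (rule smooth_on_has_dir_deriv_iterpd[OF smooth])

lemma has_dir_deriv_X: "y \<in> S \<Longrightarrow> has_dir_deriv X v y (iterpd X [v] y)"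
  using has_dir_deriv_iterpd_X[of y "[]"] by simp

lemma elementary_vec_dX: "elementary_vec_on S X (dX X i)" unfolding dX_iterpd
  by (rule elementary_vec_on_iterpd)

lemma elementary_gmat: "elementary_on S X (\<lambda>y. gmat X y $ a $ b)"
  unfolding gmat_def by (simp add: elementary_on_mink[OF elementary_vec_dX elementary_vec_dX])

lemma elementary_ginv: "elementary_on S X (\<lambda>y. ginv X y $ k $ j)"
proof (rule elementary.cong)
  show "elementary_on S X (\<lambda>y. det (\<chi> i l. if l = k then (if i = j then 1 else 0) else gmat X y $ i
      $ l) / det (gmat X y))"
  proof (rule elementary_divide)
    show "elementary_on S X (\<lambda>y. det (\<chi> i l. if l = k then (if i = j then 1 else 0) else gmat X y $
        i $ l))"
    proof (rule elementary_on_det)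
      fix i l
      show "elementary_on S X (\<lambda>y. (\<chi> i l. if l = k then (if i = j then 1 else 0) else gmat X y $ i
          $ l) $ i $ l)"
        by (cases "l = k") (simp_all add: elementary.const elementary_gmat)
    qed
    show "elementary_on S X (\<lambda>y. det (gmat X y))" by (rule elementary_on_det) (rule elementary_gmat)
    show "\<forall>y\<in>S. det (gmat X y) \<noteq> 0"
      using spacelike gmat_invertible invertible_det_nz by blast
  qed
  show "\<forall>y\<in>S. det (\<chi> i l. if l = k then (if i = j then 1 else 0) else gmat X y $ i $ l) / det (gmat
      X y) = ginv X y $ k $ j"
    using spacelike by (simp add: ginv_cramer)
qed

lemma elementary_vec_nproj: "elementary_vec_on S X F \<Longrightarrow> elementary_vec_on S X (\<lambda>y. nproj X y (F y))"
  unfolding nproj_def tproj_def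
  by (intro elementary_vec_on_diff elementary_vec_on_sum elementary_vec_on_scaleR elementary.mult
      elementary_ginv elementary_on_mink elementary_vec_dX) auto

lemma elementary_wsq: "elementary_on S X (\<lambda>y. wsq X A y)"
  unfolding wsq_def
  by (intro elementary_minus elementary_on_mink elementary_vec_nproj elementary_vec_on_const)

lemma elementary_vec_X: "elementary_vec_on S X X" using elementary_vec_on_iterpd[of S X "[]"] by simp

lemma elementary_uA: "elementary_on S X (\<lambda>y. uA X A y)"
  unfolding uA_def
  by (intro elementary_minus elementary_on_mink elementary_vec_on_const elementary_vec_X)

lemma has_dir_deriv_gmat:
  assumes y: "y \<in> S"
  shows "has_dir_deriv (\<lambda>y. gmat X y $ a $ b) v y (mink (iterpd X [v, dirx a] y) (dX X b y) + mink
      (dX X a y) (iterpd X [v, dirx b] y))"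
  using has_dir_deriv_mink[OF has_dir_deriv_iterpd_X[OF y, of "[dirx a]"] has_dir_deriv_iterpd_X[OF
      y, of "[dirx b]"]] unfolding gmat_def dX_iterpd by simp

lemma has_dir_deriv_ginv:
  assumes y: "y \<in> S"
  shows "has_dir_deriv (\<lambda>y. ginv X y $ i $ j) v y
           (- (\<Sum>a\<in>UNIV. \<Sum>b\<in>UNIV. ginv X y $ i $ a * pd (\<lambda>y. gmat X y $ a $ b) v y * ginv X y $ b $ j))"
proof -
  have spy: "spacelike_at X y" using spacelike y by blast
  let ?h = "\<lambda>i j. pd (\<lambda>y. ginv X y $ i $ j) v y" and ?dg = "\<lambda>a b. pd (\<lambda>y. gmat X y $ a $ b) v y"
  let ?gi = "ginv X y" and ?g = "gmat X y"
  have hh: "has_dir_deriv (\<lambda>y. ginv X y $ i $ j) v y (?h i j)" for i j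
    by (rule has_dir_deriv_of_elementary[OF elementary_ginv y])
  have gh: "has_dir_deriv (\<lambda>y. gmat X y $ a $ b) v y (?dg a b)" for a b
    by (rule has_dir_deriv_of_elementary[OF elementary_gmat y])
  have zero: "(\<Sum>k\<in>UNIV. ?h i k * ?g $ k $ b + ?gi $ i $ k * ?dg k b) = 0" for i b
  proof -
    have "pd (\<lambda>y. \<Sum>k\<in>UNIV. ginv X y $ i $ k * gmat X y $ k $ b) v y = pd (\<lambda>y. if i = b then 1 else
        0) v y"
      by (rule pd_cong_open[OF open_S y]) (simp add: ginv_gmat_entry[OF bspec[OF spacelike]])
    moreover have "pd (\<lambda>y. if i = b then 1 else (0::real)) v y = 0"
      by (rule pd_eqI[OF has_dir_deriv_const])
    moreover have "pd (\<lambda>y. \<Sum>k\<in>UNIV. ginv X y $ i $ k * gmat X y $ k $ b) v y = (\<Sum>k\<in>UNIV. ?h i k * ?g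
        $ k $ b + ?gi $ i $ k * ?dg k b)"
      by (rule pd_eqI[OF has_dir_deriv_sum]) (auto intro: has_dir_deriv_mult[OF hh gh])
    ultimately show ?thesis by simp
  qed
  have "?h i j = (\<Sum>b\<in>UNIV. (\<Sum>k\<in>UNIV. ?h i k * ?g $ k $ b) * ?gi $ b $ j)"
    by (simp add: sum_distrib_right mult.assoc sum.swap[of _ UNIV UNIV] sum_distrib_left[symmetric]
        gmat_ginv_entry[OF spy])
  also have "\<dots> = (\<Sum>b\<in>UNIV. (- (\<Sum>k\<in>UNIV. ?gi $ i $ k * ?dg k b)) * ?gi $ b $ j)"
  proof (intro sum.cong refl)
    fix b
    have "(\<Sum>k\<in>UNIV. ?h i k * ?g $ k $ b) = - (\<Sum>k\<in>UNIV. ?gi $ i $ k * ?dg k b)"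
      using zero[of i b] by (simp add: sum.distrib eq_neg_iff_add_eq_0)
    then show "(\<Sum>k\<in>UNIV. ?h i k * ?g $ k $ b) * ?gi $ b $ j = (- (\<Sum>k\<in>UNIV. ?gi $ i $ k * ?dg k b)) *
        ?gi $ b $ j"
      by simp
  qed
  also have "\<dots> = - (\<Sum>a\<in>UNIV. \<Sum>b\<in>UNIV. ?gi $ i $ a * ?dg a b * ?gi $ b $ j)"
    by (subst sum.swap) (simp add: sum_distrib_right sum_negf)
  finally show ?thesis using hh[of i j] by simp
qed


lemma pd_X_dirx [simp]: "pd X (dirx p) = dX X p" by (simp add: dX_def[abs_def])
lemma pd_dX_dirx [simp]: "pd (dX X j) (dirx i) = ddX X i j" by (simp add: ddX_def[abs_def])

lemma has_dir_deriv_dX: "y \<in> S \<Longrightarrow> has_dir_deriv (dX X k) v y (pd (dX X k) v y)"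
  using has_dir_deriv_iterpd_X[of y "[dirx k]" v] by simp
lemma has_dir_deriv_ddX: "y \<in> S \<Longrightarrow> has_dir_deriv (ddX X i j) v y (pd (ddX X i j) v y)"
  using has_dir_deriv_iterpd_X[of y "[dirx i, dirx j]" v] by simp

lemma ddX_sym: "y \<in> S \<Longrightarrow> ddX X i j y = ddX X j i y"
  using iterpd_swap[OF smooth, of y "dirx i" "dirx j" "[]"] by simp

lemma pd_ddX_sym: assumes y: "y \<in> S" shows "pd (ddX X k i) (dirx j) y = pd (ddX X j k) (dirx i) y"
proof -
  have "pd (ddX X k i) (dirx j) y = iterpd X [dirx j, dirx k, dirx i] y" by simp
  also have "\<dots> = iterpd X [dirx k, dirx j, dirx i] y" by (rule iterpd_swap[OF smooth y])
  also have "\<dots> = pd (iterpd X [dirx j, dirx i]) (dirx k) y" by simp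
  also have "\<dots> = pd (iterpd X [dirx i, dirx j]) (dirx k) y"
    by (rule pd_cong_open[OF open_S y]) (use iterpd_swap[OF smooth, of _ "dirx j" "dirx i" "[]"] in
        simp)
  also have "\<dots> = iterpd X [dirx k, dirx i, dirx j] y" by simp
  also have "\<dots> = iterpd X [dirx i, dirx k, dirx j] y" by (rule iterpd_swap[OF smooth y])
  also have "\<dots> = pd (ddX X k j) (dirx i) y" by simp
  also have "\<dots> = pd (ddX X j k) (dirx i) y"
    by (rule pd_cong_open[OF open_S y]) (use ddX_sym in simp)
  finally show ?thesis .
qed

lemma pd_gmat: "y \<in> S \<Longrightarrow> pd (\<lambda>y. gmat X y $ a $ b) v y = mink (pd (dX X a) v y) (dX X b y) + mink (dX
  X a y) (pd (dX X b) v y)"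
  using pd_eqI[OF has_dir_deriv_gmat] by simp

lemma pd_gmat_dirx: "y \<in> S \<Longrightarrow> pd (\<lambda>y. gmat X y $ a $ b) (dirx c) y = mink (ddX X c a y) (dX X b y) +
  mink (dX X a y) (ddX X c b y)"
  using pd_gmat[of y a b "dirx c"] by simp

lemma christoffel_eq:
  assumes y: "y \<in> S"
  shows "christoffel X k i j y = (\<Sum>l\<in>UNIV. ginv X y $ k $ l * mink (ddX X i j y) (dX X l y))"
proof -
  have "pd (\<lambda>y. gmat X y $ j $ l) (dirx i) y + pd (\<lambda>y. gmat X y $ i $ l) (dirx j) y - pd (\<lambda>y. gmat X
      y $ i $ j) (dirx l) y
        = 2 * mink (ddX X i j y) (dX X l y)" for l
    unfolding pd_gmat_dirx[OF y]
    using ddX_sym[OF y, of i j] ddX_sym[OF y, of i l] ddX_sym[OF y, of j l]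
    by (simp add: mink_sym)
  then show ?thesis unfolding christoffel_def by (simp add: sum_distrib_left)
qed

lemma mink_mcv:
  "mink w (mcv X y) = (\<Sum>i\<in>UNIV. \<Sum>j\<in>UNIV. ginv X y $ i $ j * (mink w (ddX X i j y)
      - (\<Sum>p\<in>UNIV. \<Sum>l\<in>UNIV. ginv X y $ p $ l * mink (ddX X i j y) (dX X l y) * mink w (dX X p y))))"
  unfolding mcv_def nproj_def tproj_def
  by (simp add: mink_simps sum_distrib_left right_diff_distrib mult.assoc)

lemma has_dir_deriv_uA: "y \<in> S \<Longrightarrow> has_dir_deriv (\<lambda>y. uA X A y) v y (- mink (eA A) (pd X v y))"
  unfolding uA_def
  using has_dir_deriv_minus[OF has_dir_deriv_mink[OF has_dir_deriv_const has_dir_deriv_X]]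
  by (simp add: mink_zero_left)

lemma heat_op_uA: assumes z: "z \<in> S" shows "ddt (\<lambda>y. uA X A y) z - lapl X (\<lambda>y. uA X A y) z = 0"
proof -
  let ?e = "eA A"
  have d1: "pd (\<lambda>y. uA X A y) v y = - mink ?e (pd X v y)" if "y \<in> S" for v y
    using pd_eqI[OF has_dir_deriv_uA[OF that]] .
  have d2: "pd (pd (\<lambda>y. uA X A y) (dirx j)) (dirx i) z = - mink ?e (ddX X i j z)" for i j
  proof -
    have "pd (pd (\<lambda>y. uA X A y) (dirx j)) (dirx i) z = pd (\<lambda>y. - mink ?e (dX X j y)) (dirx i) z"
      by (rule pd_cong_open[OF open_S z]) (simp add: d1)
    also have "\<dots> = - mink ?e (ddX X i j z)"
      by (rule pd_eqI, rule has_dir_deriv_eq_rhs[OF has_dir_deriv_minus[OF has_dir_deriv_mink[OF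
          has_dir_deriv_const has_dir_deriv_dX[OF z]]]]) (simp add: mink_zero_left)
    finally show ?thesis .
  qed
  have "ddt (\<lambda>y. uA X A y) z = - mink ?e (mcv X z)"
    using d1[OF z, of dirt] flow z by (simp add: ddt_def)
  moreover have "lapl X (\<lambda>y. uA X A y) z = - mink ?e (mcv X z)"
    unfolding lapl_def mink_mcv d2 d1[OF z] christoffel_eq[OF z]
    by (simp add: sum_distrib_left sum_distrib_right sum_negf right_diff_distrib mult_ac sum_subtractf)
  ultimately show ?thesis by simp
qed


lemma has_dir_deriv_ginv_entry: "y \<in> S \<Longrightarrow> has_dir_deriv (\<lambda>y. ginv X y $ i $ j) v y (pd (\<lambda>y. ginv X y
  $ i $ j) v y)"
  by (rule has_dir_deriv_of_elementary[OF elementary_ginv])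

lemma pd_mink_mcv:
  assumes y: "y \<in> S" and w: "\<And>p. mink w (dX X p y) = 0"
  shows "pd (\<lambda>y'. mink w (mcv X y')) (dirx k) y = (\<Sum>i\<in>UNIV. \<Sum>j\<in>UNIV.
      pd (\<lambda>y. ginv X y $ i $ j) (dirx k) y * mink w (ddX X i j y) + ginv X y $ i $ j * (mink w (pd
          (ddX X i j) (dirx k) y)
      - (\<Sum>p\<in>UNIV. \<Sum>l\<in>UNIV. ginv X y $ p $ l * mink (ddX X i j y) (dX X l y) * mink w (ddX X k p y))))"
proof -
  have eq: "(\<lambda>y'. mink w (mcv X y')) = (\<lambda>y. \<Sum>i\<in>UNIV. \<Sum>j\<in>UNIV. ginv X y $ i $ j * (mink w (ddX X i j y)
      - (\<Sum>p\<in>UNIV. \<Sum>l\<in>UNIV. ginv X y $ p $ l * mink (ddX X i j y) (dX X l y) * mink w (dX X p y))))"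
    by (rule ext) (rule mink_mcv)
  show ?thesis unfolding eq
    apply (rule pd_eqI, rule has_dir_deriv_eq_rhs)
     apply (rule has_dir_deriv_sum, simp, rule has_dir_deriv_sum, simp)
     apply (rule has_dir_deriv_mult, rule has_dir_deriv_ginv_entry[OF y])
     apply (rule has_dir_deriv_diff, rule has_dir_deriv_mink, rule has_dir_deriv_const, rule
         has_dir_deriv_ddX[OF y])
     apply (rule has_dir_deriv_sum, simp, rule has_dir_deriv_sum, simp)
     apply (rule has_dir_deriv_mult, rule has_dir_deriv_mult, rule has_dir_deriv_ginv_entry[OF y])
      apply (rule has_dir_deriv_mink, rule has_dir_deriv_ddX[OF y], rule has_dir_deriv_dX[OF y])
     apply (rule has_dir_deriv_mink, rule has_dir_deriv_const, rule has_dir_deriv_dX[OF y])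
    apply (simp add: w mink_zero_left)
    done
qed

lemma mink_pd_dX_dirt:
  assumes y: "y \<in> S"
  shows "mink w (pd (dX X k) dirt y) = pd (\<lambda>y'. mink w (mcv X y')) (dirx k) y"
proof -
  have "pd (dX X k) dirt y = iterpd X [dirt, dirx k] y" by simp
  also have "\<dots> = iterpd X [dirx k, dirt] y" by (rule iterpd_swap[OF smooth y])
  finally have 1: "pd (dX X k) dirt y = pd (ddt X) (dirx k) y" by (simp add: ddt_def[abs_def])
  have 2: "mink w (pd (ddt X) (dirx k) y) = pd (\<lambda>y'. mink w (ddt X y')) (dirx k) y"
  proof -
    have "has_dir_deriv (ddt X) (dirx k) y (pd (ddt X) (dirx k) y)"
      using has_dir_deriv_iterpd_X[OF y, of "[dirt]" "dirx k"] by (simp add: ddt_def[abs_def])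
    from has_dir_deriv_mink[OF has_dir_deriv_const this, of w] show ?thesis
      by (simp add: pd_eqI[symmetric] mink_zero_left)
  qed
  have 3: "pd (\<lambda>y'. mink w (ddt X y')) (dirx k) y = pd (\<lambda>y'. mink w (mcv X y')) (dirx k) y"
    by (rule pd_cong_open[OF open_S y]) (simp add: flow)
  show ?thesis using 1 2 3 by simp
qed

end

section \<open>A barrier at a point\<close>

text \<open>The tangent field \<open>V\<close> has
  coefficients \<open>xi\<close> affine in the space variables with \<open>V z = - e\<^sup>\<top>\<close>, so \<open>phi \<le> w\<^sub>A\<^sup>2\<close> with
  equality at \<open>z\<close>.\<close>

locale mcf_barrier = spacelike_mcf X S for X :: "'n::finite par \<Rightarrow> ('n, 'm::finite) amb" and S +
  fixes z :: "'n par" and A :: 'm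
  assumes z_in_S: "z \<in> S"
begin

definition "e = (eA A :: ('n, 'm) amb)"
definition "gi i j = ginv X z $ i $ j"
definition "x k = dX X k z"
definition "x2 i j = ddX X i j z"
definition "xi0 k = - (\<Sum>l\<in>UNIV. gi k l * mink e (x l))"
definition "N = e + (\<Sum>k\<in>UNIV. xi0 k *\<^sub>R x k)"
definition "B i j = mink N (x2 i j)"
definition "Y i = (\<Sum>k\<in>UNIV. xi0 k *\<^sub>R x2 i k)"
definition "L k i = - (\<Sum>l\<in>UNIV. gi k l * (B i l + mink (Y i) (x l)))"
definition xi :: "'n par \<Rightarrow> 'n \<Rightarrow> real" where "xi y k = xi0 k + (\<Sum>i\<in>UNIV. L k i * (snd y $ i - snd z $
  i))"
definition "V y = (\<Sum>k\<in>UNIV. xi y k *\<^sub>R dX X k y)"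
definition "phi y = - mink (e + V y) (e + V y)"
definition "u y = uA X A y"
definition "psi y = phi y * exp ((u y)\<^sup>2)"
definition "f y = wsq X A y * exp ((u y)\<^sup>2)"

lemma spacelike_z: "spacelike_at X z" using spacelike z_in_S by blast

lemma gi_sym: "gi i j = gi j i" by (simp add: gi_def ginv_sym[OF spacelike_z])

lemma mink_e_e: "mink e e = -1" by (simp add: e_def eA_def mink_def)

lemma N_nproj: "N = nproj X z e"
  by (simp add: N_def nproj_def tproj_eq_sum xi0_def gi_def x_def scaleR_sum_left[symmetric] sum_negf)

lemma N_perp: "mink N (x k) = 0" by (simp add: N_nproj x_def mink_nproj_dX[OF spacelike_z])

lemma N_perp_span: "mink N (\<Sum>k\<in>UNIV. c k *\<^sub>R x k) = 0"
  by (simp add: mink_sum_right mink_scaleR_right N_perp)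

lemma N_perp_tproj: "mink N (tproj X z w) = 0"
  unfolding tproj_eq_sum using N_perp_span[of "\<lambda>i. \<Sum>j\<in>UNIV. ginv X z $ i $ j * mink w (dX X j z)"]
  by (simp add: x_def)

lemma wsq_z: "wsq X A z = - mink N N" by (simp add: wsq_def N_nproj e_def)

lemma V_z: "V z = (\<Sum>k\<in>UNIV. xi0 k *\<^sub>R x k)" by (simp add: V_def xi_def x_def)

lemma eV_z: "e + V z = N" by (simp add: V_z N_def)

lemma phi_z: "phi z = wsq X A z" by (simp add: phi_def eV_z wsq_z)

lemma elementary_xi: "elementary_on S X (\<lambda>y. xi y k)"
  unfolding xi_def
  by (intro elementary.add elementary.const elementary_sum elementary.mult elementary_diff
      elementary_on_linear finite bounded_linear_compose[OF bounded_linear_vec_nth bounded_linear_snd])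

lemma elementary_vec_V: "elementary_vec_on S X V"
  unfolding V_def[abs_def]
  by (intro elementary_vec_on_sum elementary_vec_on_scaleR elementary_xi elementary_vec_dX finite)

lemma elementary_phi: "elementary_on S X phi"
  unfolding phi_def[abs_def]
  by (intro elementary_minus elementary_on_mink elementary_vec_on_add elementary_vec_on_const
      elementary_vec_V)

lemma elementary_u: "elementary_on S X u" unfolding u_def[abs_def] by (rule elementary_uA)

lemma elementary_psi: "elementary_on S X psi" unfolding psi_def[abs_def]
  by (intro elementary.mult elementary_phi elementary.exp elementary_power2 elementary_u)

lemma elementary_f: "elementary_on S X f" unfolding f_def[abs_def]
  by (intro elementary.mult elementary_wsq elementary.exp elementary_power2 elementary_u)

lemma smooth_phi: "smooth_on S phi" by (rule smooth_of_elementary[OF elementary_phi])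
lemma smooth_u: "smooth_on S u" by (rule smooth_of_elementary[OF elementary_u])
lemma smooth_psi: "smooth_on S psi" by (rule smooth_of_elementary[OF elementary_psi])
lemma smooth_f: "smooth_on S f" by (rule smooth_of_elementary[OF elementary_f])

lemma psi_le_f: "y \<in> S \<Longrightarrow> psi y \<le> f y"
proof -
  assume y: "y \<in> S"
  have "phi y \<le> wsq X A y"
    unfolding phi_def V_def wsq_def e_def using neg_mink_nproj_ge[of X y "eA A" "xi y"] spacelike y
    by auto
  then show ?thesis unfolding psi_def f_def by (simp add: mult_right_mono)
qed

lemma psi_z: "psi z = f z" by (simp add: psi_def f_def phi_z)

lemma heat_op_f_le_psi: "ddt f z - lapl X f z \<le> ddt psi z - lapl X psi z"
  by (rule heat_op_le_at_touching[OF smooth_f smooth_psi z_in_S spacelike_z]) (use psi_le_f psi_z in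
      auto)

definition "Lw k w = (\<Sum>i\<in>UNIV. L k i * snd w $ i)"

lemma Lw_dirt: "Lw k dirt = 0" by (simp add: Lw_def dirt_def)
lemma Lw_dirx: "Lw k (dirx i) = L k i"
proof -
  have "(\<Sum>l\<in>UNIV. L k l * axis i 1 $ l) = (\<Sum>l\<in>UNIV. if l = i then L k l else 0)"
    by (rule sum.cong) (auto simp: axis_def)
  then show ?thesis by (simp add: Lw_def dirx_def)
qed

lemma has_dir_deriv_xi: "has_dir_deriv (\<lambda>y. xi y k) w y (Lw k w)"
  unfolding xi_def[abs_def] Lw_def
  by (rule has_dir_deriv_eq_rhs[OF has_dir_deriv_add[OF has_dir_deriv_const has_dir_deriv_sum[OF
      finite has_dir_deriv_mult[OF has_dir_deriv_const has_dir_deriv_diff[OF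
          has_dir_deriv_vec_nth[OF has_dir_deriv_snd[OF has_dir_deriv_ident]]
              has_dir_deriv_const]]]]]) simp

definition "V1 w y = (\<Sum>k\<in>UNIV. Lw k w *\<^sub>R dX X k y + xi y k *\<^sub>R pd (dX X k) w y)"

lemma has_dir_deriv_V: "y \<in> S \<Longrightarrow> has_dir_deriv V w y (V1 w y)"
  unfolding V_def[abs_def] V1_def
  by (rule has_dir_deriv_sum[OF finite has_dir_deriv_scaleR[OF has_dir_deriv_xi has_dir_deriv_dX]])

lemma pd_phi: "y \<in> S \<Longrightarrow> pd phi w y = -2 * mink (e + V y) (V1 w y)"
  unfolding phi_def[abs_def]
  by (rule pd_eqI, rule has_dir_deriv_eq_rhs[OF has_dir_deriv_minus[OF has_dir_deriv_mink[OF
      has_dir_deriv_add[OF has_dir_deriv_const has_dir_deriv_V] has_dir_deriv_add[OF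
          has_dir_deriv_const has_dir_deriv_V]]]])
     (simp_all add: mink_sym[of "V1 w y"])

lemma V1_dirt: "V1 dirt z = (\<Sum>k\<in>UNIV. xi0 k *\<^sub>R pd (dX X k) dirt z)"
  by (simp add: V1_def Lw_dirt xi_def)

lemma V1_dirx: "V1 (dirx i) z = (\<Sum>k\<in>UNIV. L k i *\<^sub>R x k) + Y i"
  by (simp add: V1_def Lw_dirx xi_def x_def Y_def x2_def sum.distrib)

definition "V2 i j = (\<Sum>k\<in>UNIV. L k j *\<^sub>R x2 i k + L k i *\<^sub>R x2 j k + xi0 k *\<^sub>R pd (ddX X j k) (dirx i) z)"

lemma has_dir_deriv_V1: "has_dir_deriv (V1 (dirx j)) (dirx i) z (V2 i j)"
proof -
  have "V1 (dirx j) = (\<lambda>y. \<Sum>k\<in>UNIV. L k j *\<^sub>R dX X k y + xi y k *\<^sub>R ddX X j k y)"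
    by (simp add: V1_def[abs_def] Lw_dirx)
  moreover have "has_dir_deriv (\<lambda>y. \<Sum>k\<in>UNIV. L k j *\<^sub>R dX X k y + xi y k *\<^sub>R ddX X j k y) (dirx i) z
      (V2 i j)"
    by (rule has_dir_deriv_eq_rhs[OF has_dir_deriv_sum[OF finite has_dir_deriv_add[OF
        has_dir_deriv_scaleR[OF has_dir_deriv_const has_dir_deriv_dX[OF z_in_S]]
            has_dir_deriv_scaleR[OF has_dir_deriv_xi has_dir_deriv_ddX[OF z_in_S]]]]])
      (simp add: V2_def Lw_dirx xi_def x2_def add.assoc)
  ultimately show ?thesis by simp
qed

lemma pd_pd_phi: "pd (pd phi (dirx j)) (dirx i) z = -2 * (mink (V1 (dirx i) z) (V1 (dirx j) z) +
  mink N (V2 i j))"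
proof -
  have "pd (pd phi (dirx j)) (dirx i) z = pd (\<lambda>y. -2 * mink (e + V y) (V1 (dirx j) y)) (dirx i) z"
    by (rule pd_cong_open[OF open_S z_in_S]) (simp add: pd_phi)
  also have "\<dots> = -2 * (mink (V1 (dirx i) z) (V1 (dirx j) z) + mink N (V2 i j))"
    by (rule pd_eqI, rule has_dir_deriv_eq_rhs[OF has_dir_deriv_mult[OF has_dir_deriv_const
        has_dir_deriv_mink[OF has_dir_deriv_add[OF has_dir_deriv_const has_dir_deriv_V[OF z_in_S]]
            has_dir_deriv_V1]]])
       (simp add: eV_z)
  finally show ?thesis .
qed

lemma pd_phi_z: "pd phi w z = -2 * mink N (V1 w z)" using pd_phi[OF z_in_S] by (simp add: eV_z)

lemma heat_op_psi:
  "ddt psi z - lapl X psi z = exp ((u z)\<^sup>2) * ((ddt phi z - lapl X phi z)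
       - 2 * phi z * (1 + 2 * (u z)\<^sup>2) * (\<Sum>i\<in>UNIV. \<Sum>j\<in>UNIV. gi i j * pd u (dirx i) z * pd u (dirx j) z)
       - 4 * u z * (\<Sum>i\<in>UNIV. \<Sum>j\<in>UNIV. gi i j * pd u (dirx i) z * pd phi (dirx j) z))"
proof -
  have "ddt u z - lapl X u z = 0" unfolding u_def[abs_def] by (rule heat_op_uA[OF z_in_S])
  then show ?thesis
    using heat_op_mult_exp_square[OF smooth_phi smooth_u z_in_S, of X] ginv_sym[OF spacelike_z]
    unfolding psi_def[abs_def] gi_def by simp
qed

lemma pd_u_z: "pd u (dirx i) z = - mink e (x i)"
  using pd_eqI[OF has_dir_deriv_uA[OF z_in_S]] by (simp add: u_def[abs_def] e_def x_def)


definition "NY i = nproj X z (Y i)"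
definition "dH k i j = pd (\<lambda>y. ginv X y $ i $ j) (dirx k) z"
definition "T3 k i j = mink N (pd (ddX X i j) (dirx k) z)"
definition "Gam1 i j l = mink (x2 i j) (x l)"
definition "Bxi k = (\<Sum>l\<in>UNIV. xi0 l * B k l)"
definition "Bup i k = (\<Sum>l\<in>UNIV. gi k l * B i l)"
definition "Yup i k = (\<Sum>l\<in>UNIV. gi k l * mink (Y i) (x l))"
definition "Bsq = (\<Sum>i\<in>UNIV. \<Sum>j\<in>UNIV. gi i j * (\<Sum>l\<in>UNIV. B i l * Bup j l))"
definition "YB_cross = (\<Sum>i\<in>UNIV. \<Sum>j\<in>UNIV. gi i j * (\<Sum>k\<in>UNIV. Yup i k * B j k))"

lemma x2_sym: "x2 i j = x2 j i" by (simp add: x2_def ddX_sym[OF z_in_S])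
lemma B_sym: "B i j = B j i" by (simp add: B_def x2_sym)

lemma T3_rot: "T3 i j k = T3 k i j"
proof -
  have r: "T3 j k i = T3 i j k" for i j k by (simp add: T3_def pd_ddX_sym[OF z_in_S])
  show ?thesis using r[of i j k] r[of j k i] by simp
qed

lemma christoffel_z: "christoffel X k i j z = (\<Sum>l\<in>UNIV. gi k l * Gam1 i j l)"
  by (simp add: christoffel_eq[OF z_in_S] gi_def Gam1_def x2_def x_def)

lemma L_eq: "L k i = - (Bup i k + Yup i k)"
  by (simp add: L_def Bup_def Yup_def distrib_left sum.distrib)

lemma mink_N_V1: "mink N (V1 (dirx k) z) = Bxi k"
  by (simp add: V1_dirx mink_add_right N_perp Y_def mink_sum_right mink_scaleR_right Bxi_def B_def)

lemma mink_N_V2: "mink N (V2 i j) = (\<Sum>k\<in>UNIV. L k j * B i k + L k i * B j k + xi0 k * T3 i j k)"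
  by (simp add: V2_def mink_sum_right mink_add_right mink_scaleR_right B_def T3_def)

lemma mink_N_dX_dirt: "mink N (pd (dX X k) dirt z) = (\<Sum>i\<in>UNIV. \<Sum>j\<in>UNIV. dH k i j * B i j + gi i j *
  (T3 k i j
      - (\<Sum>p\<in>UNIV. \<Sum>l\<in>UNIV. gi p l * Gam1 i j l * B k p)))"
  unfolding mink_pd_dX_dirt[OF z_in_S] pd_mink_mcv[OF z_in_S N_perp[unfolded x_def]]
  by (simp add: dH_def B_def gi_def T3_def Gam1_def x2_def x_def)

lemma ddt_phi: "ddt phi z = -2 * (\<Sum>k\<in>UNIV. xi0 k * mink N (pd (dX X k) dirt z))"
  by (simp add: ddt_def pd_phi_z V1_dirt mink_sum_right mink_scaleR_right)

lemma lapl_phi: "lapl X phi z = (\<Sum>i\<in>UNIV. \<Sum>j\<in>UNIV. gi i j *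
     (-2 * (mink (V1 (dirx i) z) (V1 (dirx j) z) + mink N (V2 i j)) - (\<Sum>k\<in>UNIV. (\<Sum>l\<in>UNIV. gi k l *
         Gam1 i j l) * (-2 * Bxi k))))"
  unfolding lapl_def pd_pd_phi pd_phi_z mink_N_V1 christoffel_z by (simp add: gi_def)

lemma dH_eq: "dH k i j = - (\<Sum>a\<in>UNIV. \<Sum>b\<in>UNIV. gi i a * (Gam1 k a b + Gam1 k b a) * gi b j)"
  using pd_eqI[OF has_dir_deriv_ginv[OF z_in_S, of i j "dirx k"]]
  by (simp add: dH_def pd_gmat_dirx[OF z_in_S] gi_def Gam1_def x2_def x_def mink_sym)

lemma xi0_Gam1: "(\<Sum>k\<in>UNIV. xi0 k * Gam1 k a b) = mink (Y a) (x b)"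
  by (simp add: Gam1_def Y_def mink_sum_left mink_scaleR_left x2_sym)

lemma xi_dH: "(\<Sum>k\<in>UNIV. xi0 k * dH k i j) = - (\<Sum>a\<in>UNIV. \<Sum>b\<in>UNIV. gi i a * (mink (Y a) (x b) + mink
  (Y b) (x a)) * gi b j)"
proof -
  have "(\<Sum>k\<in>UNIV. xi0 k * dH k i j) = - (\<Sum>a\<in>UNIV. \<Sum>b\<in>UNIV. gi i a * (\<Sum>k\<in>UNIV. xi0 k * (Gam1 k a b +
      Gam1 k b a)) * gi b j)"
    unfolding dH_eq
    by (simp add: sum_distrib_left sum_distrib_right sum_negf mult_ac) (subst sum.swap, rule
        sum.cong[OF refl], subst sum.swap, simp)
  also have "\<dots> = - (\<Sum>a\<in>UNIV. \<Sum>b\<in>UNIV. gi i a * (mink (Y a) (x b) + mink (Y b) (x a)) * gi b j)"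
    by (simp add: distrib_left sum.distrib xi0_Gam1)
  finally show ?thesis .
qed


lemma sum_Y_gi: "(\<Sum>b\<in>UNIV. mink (Y a) (x b) * gi b j) = Yup a j"
  by (simp add: Yup_def gi_sym[of _ j] mult.commute)

lemma YB_cross_first: "(\<Sum>i\<in>UNIV. \<Sum>j\<in>UNIV. (\<Sum>a\<in>UNIV. \<Sum>b\<in>UNIV. gi i a * mink (Y a) (x b) * gi b j) * B
  i j) = YB_cross"
proof -
  have "(\<Sum>i\<in>UNIV. \<Sum>j\<in>UNIV. (\<Sum>a\<in>UNIV. \<Sum>b\<in>UNIV. gi i a * mink (Y a) (x b) * gi b j) * B i j)
      = (\<Sum>i\<in>UNIV. \<Sum>j\<in>UNIV. \<Sum>a\<in>UNIV. gi a i * Yup a j * B i j)"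
    by (simp add: sum_distrib_right mult.assoc sum_distrib_left[symmetric] sum_Y_gi) (simp add: gi_sym)
  also have "\<dots> = (\<Sum>a\<in>UNIV. \<Sum>i\<in>UNIV. \<Sum>j\<in>UNIV. gi a i * Yup a j * B i j)" by (rule sum_rotate3)
  also have "\<dots> = YB_cross" by (simp add: YB_cross_def sum_distrib_left mult.assoc)
  finally show ?thesis .
qed

lemma YB_cross_second: "(\<Sum>i\<in>UNIV. \<Sum>j\<in>UNIV. (\<Sum>a\<in>UNIV. \<Sum>b\<in>UNIV. gi i a * mink (Y b) (x a) * gi b j) *
  B i j) = YB_cross"
proof -
  have "(\<Sum>i\<in>UNIV. \<Sum>j\<in>UNIV. (\<Sum>a\<in>UNIV. \<Sum>b\<in>UNIV. gi i a * mink (Y b) (x a) * gi b j) * B i j)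
      = (\<Sum>i\<in>UNIV. \<Sum>j\<in>UNIV. \<Sum>b\<in>UNIV. gi b j * Yup b i * B j i)"
  proof (intro sum.cong refl)
    fix i j
    have "(\<Sum>a\<in>UNIV. \<Sum>b\<in>UNIV. gi i a * mink (Y b) (x a) * gi b j) = (\<Sum>b\<in>UNIV. \<Sum>a\<in>UNIV. gi i a * mink
        (Y b) (x a) * gi b j)"
      by (rule sum.swap)
    also have "\<dots> = (\<Sum>b\<in>UNIV. gi b j * Yup b i)"
      by (simp add: Yup_def sum_distrib_left sum_distrib_right mult_ac)
    finally show "(\<Sum>a\<in>UNIV. \<Sum>b\<in>UNIV. gi i a * mink (Y b) (x a) * gi b j) * B i j = (\<Sum>b\<in>UNIV. gi b j
        * Yup b i * B j i)"
      by (simp add: sum_distrib_right B_sym[of i j])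
  qed
  also have "\<dots> = (\<Sum>b\<in>UNIV. \<Sum>j\<in>UNIV. \<Sum>i\<in>UNIV. gi b j * Yup b i * B j i)" by (rule sum_reverse3)
  also have "\<dots> = YB_cross" by (simp add: YB_cross_def sum_distrib_left mult.assoc)
  finally show ?thesis .
qed

lemma sum_xi_dH_B: "(\<Sum>i\<in>UNIV. \<Sum>j\<in>UNIV. (\<Sum>k\<in>UNIV. xi0 k * dH k i j) * B i j) = - 2 * YB_cross"
proof -
  have "(\<Sum>i\<in>UNIV. \<Sum>j\<in>UNIV. (\<Sum>k\<in>UNIV. xi0 k * dH k i j) * B i j)
     = - ((\<Sum>i\<in>UNIV. \<Sum>j\<in>UNIV. (\<Sum>a\<in>UNIV. \<Sum>b\<in>UNIV. gi i a * mink (Y a) (x b) * gi b j) * B i j)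
        + (\<Sum>i\<in>UNIV. \<Sum>j\<in>UNIV. (\<Sum>a\<in>UNIV. \<Sum>b\<in>UNIV. gi i a * mink (Y b) (x a) * gi b j) * B i j))"
    unfolding xi_dH
    by (simp add: left_diff_distrib right_diff_distrib sum_subtractf sum_negf distrib_left
        distrib_right sum.distrib)
  then show ?thesis unfolding YB_cross_first YB_cross_second by simp
qed

lemma Bsq_eq: "Bsq = (\<Sum>i\<in>UNIV. \<Sum>j\<in>UNIV. gi i j * (\<Sum>k\<in>UNIV. Bup i k * B j k))"
  unfolding Bsq_def by (subst sum.swap) (simp add: gi_sym mult.commute)

lemma sum_L_B_first: "(\<Sum>i\<in>UNIV. \<Sum>j\<in>UNIV. gi i j * (\<Sum>k\<in>UNIV. L k i * B j k)) = - Bsq - YB_cross"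
  unfolding L_eq Bsq_eq YB_cross_def
  by (simp add: left_diff_distrib right_diff_distrib sum_subtractf sum_negf)

lemma sum_L_B_second: "(\<Sum>i\<in>UNIV. \<Sum>j\<in>UNIV. gi i j * (\<Sum>k\<in>UNIV. L k j * B i k)) = - Bsq - YB_cross"
proof -
  have "(\<Sum>i\<in>UNIV. \<Sum>j\<in>UNIV. gi i j * (\<Sum>k\<in>UNIV. L k j * B i k)) = (\<Sum>i\<in>UNIV. \<Sum>j\<in>UNIV. gi i j *
      (\<Sum>k\<in>UNIV. L k i * B j k))"
    by (subst sum.swap) (simp add: gi_sym)
  then show ?thesis using sum_L_B_first by simp
qed

lemma sum_N_V2: "(\<Sum>i\<in>UNIV. \<Sum>j\<in>UNIV. gi i j * mink N (V2 i j)) = - 2 * Bsq - 2 * YB_cross + (\<Sum>i\<in>UNIV.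
  \<Sum>j\<in>UNIV. gi i j * (\<Sum>k\<in>UNIV. xi0 k * T3 i j k))"
  using sum_L_B_first sum_L_B_second unfolding mink_N_V2 by (simp add: sum.distrib distrib_left)


lemma tproj_Y: "tproj X z (Y i) = (\<Sum>k\<in>UNIV. Yup i k *\<^sub>R x k)"
  by (simp add: tproj_eq_sum Yup_def gi_def x_def)

lemma V1_decomp: "V1 (dirx i) z = NY i - (\<Sum>k\<in>UNIV. Bup i k *\<^sub>R x k)"
proof -
  have L: "(\<Sum>k\<in>UNIV. L k i *\<^sub>R x k) = - (\<Sum>k\<in>UNIV. Bup i k *\<^sub>R x k) - (\<Sum>k\<in>UNIV. Yup i k *\<^sub>R x k)"
    unfolding L_eq
    by (simp add: scaleR_add_left scaleR_diff_left sum.distrib sum_negf[symmetric]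
        sum_subtractf[symmetric])
  show ?thesis unfolding V1_dirx NY_def nproj_def tproj_Y L by (simp add: algebra_simps)
qed

lemma NY_perp: "mink (NY i) (x k) = 0" by (simp add: NY_def x_def mink_nproj_dX[OF spacelike_z])

lemma sum_gmat_Bup: "(\<Sum>p\<in>UNIV. mink (x k) (x p) * Bup j p) = B j k"
proof -
  have "(\<Sum>p\<in>UNIV. mink (x k) (x p) * Bup j p) = (\<Sum>l\<in>UNIV. (\<Sum>p\<in>UNIV. gmat X z $ k $ p * ginv X z $ p
      $ l) * B j l)"
    by (simp add: Bup_def gi_def x_def gmat_def sum_distrib_left sum_distrib_right mult_ac) (rule
        sum.swap)
  also have "\<dots> = B j k"
  proof -
    have e: "(\<Sum>p\<in>UNIV. gmat X z $ k $ p * ginv X z $ p $ l) = (if l = k then 1 else 0)" for l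
      using gmat_ginv_entry[OF spacelike_z, of k l] by auto
    have "(\<Sum>l\<in>UNIV. (if l = k then 1 else 0) * B j l) = (\<Sum>l\<in>UNIV. if l = k then B j l else 0)"
      by (rule sum.cong) auto
    then show ?thesis by (simp add: e)
  qed
  finally show ?thesis .
qed

lemma mink_V1_V1: "mink (V1 (dirx i) z) (V1 (dirx j) z) = mink (NY i) (NY j) + (\<Sum>k\<in>UNIV. Bup i k * B
  j k)"
proof -
  have "mink (\<Sum>k\<in>UNIV. Bup i k *\<^sub>R x k) (\<Sum>p\<in>UNIV. Bup j p *\<^sub>R x p) = (\<Sum>k\<in>UNIV. Bup i k * (\<Sum>p\<in>UNIV.
      mink (x k) (x p) * Bup j p))"
    by (simp add: mink_sum_sum sum_distrib_left mult_ac)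
  also have "\<dots> = (\<Sum>k\<in>UNIV. Bup i k * B j k)" by (simp add: sum_gmat_Bup)
  finally have 1: "mink (\<Sum>k\<in>UNIV. Bup i k *\<^sub>R x k) (\<Sum>p\<in>UNIV. Bup j p *\<^sub>R x p) = (\<Sum>k\<in>UNIV. Bup i k * B
      j k)" .
  have 2: "mink (NY i) (\<Sum>k\<in>UNIV. c k *\<^sub>R x k) = 0" for c i
    by (simp add: mink_sum_right mink_scaleR_right NY_perp)
  have 3: "mink (\<Sum>k\<in>UNIV. c k *\<^sub>R x k) (NY i) = 0" for c i using 2 by (simp add: mink_sym)
  show ?thesis unfolding V1_decomp by (simp add: mink_diff_left mink_diff_right 1 2 3)
qed

definition "NY_sq = (\<Sum>i\<in>UNIV. \<Sum>j\<in>UNIV. gi i j * mink (NY i) (NY j))"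
definition "T3_trace = (\<Sum>i\<in>UNIV. \<Sum>j\<in>UNIV. gi i j * (\<Sum>k\<in>UNIV. xi0 k * T3 i j k))"
definition "Gam1_trace = (\<Sum>i\<in>UNIV. \<Sum>j\<in>UNIV. gi i j * (\<Sum>k\<in>UNIV. (\<Sum>l\<in>UNIV. gi k l * Gam1 i j l) * Bxi
  k))"

lemma sum_V1_V1: "(\<Sum>i\<in>UNIV. \<Sum>j\<in>UNIV. gi i j * mink (V1 (dirx i) z) (V1 (dirx j) z)) = NY_sq + Bsq"
  unfolding mink_V1_V1 NY_sq_def Bsq_eq by (simp add: distrib_left sum.distrib)

lemma sum_xi_T3: "(\<Sum>k\<in>UNIV. xi0 k * (\<Sum>i\<in>UNIV. \<Sum>j\<in>UNIV. gi i j * T3 k i j)) = T3_trace"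
proof -
  have "(\<Sum>k\<in>UNIV. xi0 k * (\<Sum>i\<in>UNIV. \<Sum>j\<in>UNIV. gi i j * T3 k i j)) = (\<Sum>k\<in>UNIV. \<Sum>i\<in>UNIV. \<Sum>j\<in>UNIV. gi i
      j * xi0 k * T3 i j k)"
    by (simp add: sum_distrib_left T3_rot mult_ac)
  also have "\<dots> = (\<Sum>i\<in>UNIV. \<Sum>j\<in>UNIV. \<Sum>k\<in>UNIV. gi i j * xi0 k * T3 i j k)"
    by (rule sum_rotate3[symmetric])
  also have "\<dots> = T3_trace" by (simp add: T3_trace_def sum_distrib_left mult_ac)
  finally show ?thesis .
qed

lemma sum_xi_Gam1_B: "(\<Sum>k\<in>UNIV. xi0 k * (\<Sum>i\<in>UNIV. \<Sum>j\<in>UNIV. gi i j * (\<Sum>p\<in>UNIV. \<Sum>l\<in>UNIV. gi p l * Gam1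
  i j l * B k p))) = Gam1_trace"
proof -
  define Q where "Q i j p = (\<Sum>l\<in>UNIV. gi p l * Gam1 i j l)" for i j p
  have "(\<Sum>k\<in>UNIV. xi0 k * (\<Sum>i\<in>UNIV. \<Sum>j\<in>UNIV. gi i j * (\<Sum>p\<in>UNIV. \<Sum>l\<in>UNIV. gi p l * Gam1 i j l * B k p)))
      = (\<Sum>k\<in>UNIV. \<Sum>i\<in>UNIV. \<Sum>j\<in>UNIV. xi0 k * (gi i j * (\<Sum>p\<in>UNIV. Q i j p * B k p)))"
    by (simp add: Q_def sum_distrib_left sum_distrib_right mult_ac)
  also have "\<dots> = (\<Sum>i\<in>UNIV. \<Sum>j\<in>UNIV. \<Sum>k\<in>UNIV. xi0 k * (gi i j * (\<Sum>p\<in>UNIV. Q i j p * B k p)))"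
    by (rule sum_rotate3[symmetric])
  also have "\<dots> = (\<Sum>i\<in>UNIV. \<Sum>j\<in>UNIV. gi i j * (\<Sum>p\<in>UNIV. Q i j p * Bxi p))"
  proof (intro sum.cong refl)
    fix i j
    have "(\<Sum>k\<in>UNIV. xi0 k * (gi i j * (\<Sum>p\<in>UNIV. Q i j p * B k p))) = gi i j * (\<Sum>k\<in>UNIV. \<Sum>p\<in>UNIV. xi0
        k * Q i j p * B k p)"
      by (simp add: sum_distrib_left mult_ac)
    also have "\<dots> = gi i j * (\<Sum>p\<in>UNIV. \<Sum>k\<in>UNIV. xi0 k * Q i j p * B k p)" by (subst sum.swap) simp
    also have "\<dots> = gi i j * (\<Sum>p\<in>UNIV. Q i j p * Bxi p)"
      by (simp add: Bxi_def sum_distrib_left B_sym mult_ac)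
    finally show "(\<Sum>k\<in>UNIV. xi0 k * (gi i j * (\<Sum>p\<in>UNIV. Q i j p * B k p))) = gi i j * (\<Sum>p\<in>UNIV. Q i
        j p * Bxi p)" .
  qed
  also have "\<dots> = Gam1_trace" by (simp add: Gam1_trace_def Q_def)
  finally show ?thesis .
qed

lemma sum_xi_N_dX_dirt: "(\<Sum>k\<in>UNIV. xi0 k * mink N (pd (dX X k) dirt z)) = - 2 * YB_cross + T3_trace
  - Gam1_trace"
proof -
  have "(\<Sum>k\<in>UNIV. xi0 k * mink N (pd (dX X k) dirt z))
     = (\<Sum>k\<in>UNIV. \<Sum>i\<in>UNIV. \<Sum>j\<in>UNIV. xi0 k * dH k i j * B i j)
       + (\<Sum>k\<in>UNIV. xi0 k * (\<Sum>i\<in>UNIV. \<Sum>j\<in>UNIV. gi i j * T3 k i j))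
       - (\<Sum>k\<in>UNIV. xi0 k * (\<Sum>i\<in>UNIV. \<Sum>j\<in>UNIV. gi i j * (\<Sum>p\<in>UNIV. \<Sum>l\<in>UNIV. gi p l * Gam1 i j l * B k
           p)))"
    unfolding mink_N_dX_dirt
    by (simp add: distrib_left right_diff_distrib sum.distrib sum_subtractf sum_distrib_left mult_ac)
  also have "(\<Sum>k\<in>UNIV. \<Sum>i\<in>UNIV. \<Sum>j\<in>UNIV. xi0 k * dH k i j * B i j) = (\<Sum>i\<in>UNIV. \<Sum>j\<in>UNIV. (\<Sum>k\<in>UNIV.
      xi0 k * dH k i j) * B i j)"
    by (subst sum_rotate3[symmetric]) (simp add: sum_distrib_right)
  finally show ?thesis unfolding sum_xi_dH_B sum_xi_T3 sum_xi_Gam1_B by simp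
qed

lemma heat_op_phi: "ddt phi z - lapl X phi z = 2 * NY_sq - 2 * Bsq"
proof -
  have l: "lapl X phi z = -2 * (NY_sq + Bsq) - 2 * (- 2 * Bsq - 2 * YB_cross + T3_trace) + 2 *
      Gam1_trace"
  proof -
    have "lapl X phi z = -2 * (\<Sum>i\<in>UNIV. \<Sum>j\<in>UNIV. gi i j * mink (V1 (dirx i) z) (V1 (dirx j) z))
        - 2 * (\<Sum>i\<in>UNIV. \<Sum>j\<in>UNIV. gi i j * mink N (V2 i j)) + 2 * Gam1_trace"
      unfolding lapl_phi Gam1_trace_def
      by (simp add: distrib_left right_diff_distrib sum.distrib sum_subtractf sum_negf
          sum_distrib_left mult_ac)
    then show ?thesis unfolding sum_V1_V1 sum_N_V2 T3_trace_def by simp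
  qed
  show ?thesis unfolding ddt_phi sum_xi_N_dX_dirt l by simp
qed

lemma mink_normal_sq_le:
  assumes Z: "\<And>k. mink Z (x k) = 0"
  shows "(mink N Z)\<^sup>2 \<le> mink Z Z * mink N N"
proof (rule quadratic_nonpos_discriminant)
  show "mink Z Z \<le> 0" by (rule mink_normal_nonpos[OF spacelike_z Z[unfolded x_def]])
  fix t :: real
  have "mink (N + t *\<^sub>R Z) (N + t *\<^sub>R Z) \<le> 0"
    by (rule mink_normal_nonpos[OF spacelike_z])
      (simp add: mink_add_left mink_scaleR_left N_perp[unfolded x_def] Z[unfolded x_def])
  moreover have "mink (N + t *\<^sub>R Z) (N + t *\<^sub>R Z) = mink Z Z * t\<^sup>2 + 2 * mink N Z * t + mink N N"
    by (simp add: mink_simps mink_sym[of Z N] power2_eq_square algebra_simps)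
  ultimately show "mink Z Z * t\<^sup>2 + 2 * mink N Z * t + mink N N \<le> 0" by simp
qed

lemma mink_N_NY: "mink N (NY i) = Bxi i"
  by (simp add: NY_def nproj_def mink_diff_right N_perp_tproj Y_def mink_sum_right mink_scaleR_right
      Bxi_def B_def)

definition "tan_sq = (\<Sum>i\<in>UNIV. \<Sum>j\<in>UNIV. gi i j * mink e (x i) * mink e (x j))"
definition "B_xi_xi = (\<Sum>j\<in>UNIV. xi0 j * Bxi j)"

lemma wsq_z_eq: "wsq X A z = 1 + tan_sq"
proof -
  have "mink N N = mink N e + mink N (\<Sum>k\<in>UNIV. xi0 k *\<^sub>R x k)"
    by (subst (2) N_def) (simp add: mink_add_right)
  also have "\<dots> = mink N e" by (simp add: N_perp_span)
  also have "\<dots> = -1 + (\<Sum>k\<in>UNIV. xi0 k * mink e (x k))"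
    using mink_sym[of "x _" e]
    by (simp add: N_def mink_add_left mink_e_e mink_sum_left mink_scaleR_left)
  also have "(\<Sum>k\<in>UNIV. xi0 k * mink e (x k)) = - tan_sq"
    by (simp add: tan_sq_def xi0_def sum_distrib_left sum_distrib_right sum_negf mult_ac)
  finally show ?thesis by (simp add: wsq_z)
qed

lemma heat_op_psi_z:
  "ddt psi z - lapl X psi z
    = exp ((u z)\<^sup>2) * ((2 * NY_sq - 2 * Bsq) - 2 * wsq X A z * (1 + 2 * (u z)\<^sup>2) * tan_sq + 8 * u z *
        B_xi_xi)"
proof -
  have "(\<Sum>i\<in>UNIV. \<Sum>j\<in>UNIV. gi i j * pd u (dirx i) z * pd u (dirx j) z) = tan_sq"
    by (simp add: pd_u_z tan_sq_def)
  moreover have "(\<Sum>i\<in>UNIV. \<Sum>j\<in>UNIV. gi i j * pd u (dirx i) z * pd phi (dirx j) z) = - 2 * B_xi_xi"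
  proof -
    have "(\<Sum>i\<in>UNIV. \<Sum>j\<in>UNIV. gi i j * pd u (dirx i) z * pd phi (dirx j) z)
        = 2 * (\<Sum>j\<in>UNIV. (\<Sum>i\<in>UNIV. gi j i * mink e (x i)) * Bxi j)"
      by (simp add: pd_u_z pd_phi_z mink_N_V1 sum_distrib_left sum_distrib_right mult_ac)
        (subst sum.swap, simp add: gi_sym mult_ac)
    also have "\<dots> = - 2 * B_xi_xi" by (simp add: B_xi_xi_def xi0_def sum_distrib_left sum_negf)
    finally show ?thesis .
  qed
  ultimately show ?thesis unfolding heat_op_psi heat_op_phi phi_z by simp
qed

text \<open>The remaining estimate is a Cauchy-Schwarz argument in an orthonormal frame of the tangent
  space, whose coefficients are the rows of a Gram factor of \<open>g\<^sup>i\<^sup>j\<close>.\<close>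

definition gram :: "'n \<Rightarrow> 'n \<Rightarrow> real" where
  "gram = (SOME p. \<forall>i j. gi i j = (\<Sum>a\<in>UNIV. p a i * p a j))"

lemma gi_gram: "gi i j = (\<Sum>a\<in>UNIV. gram a i * gram a j)"
proof -
  have psd: "0 \<le> (\<Sum>i\<in>UNIV. \<Sum>j\<in>UNIV. v i * v j * gi i j)" for v
    using quad_ginv_nonneg[OF spacelike_z, of "\<chi> i. v i"] by (simp add: quad_def gi_def)
  have "\<exists>p::'n \<Rightarrow> 'n \<Rightarrow> real. \<forall>i j. gi i j = (\<Sum>a\<in>UNIV. p a i * p a j)"
    using psd_gram_decomp[of UNIV gi, OF finite gi_sym psd] by simp
  from someI_ex[OF this] show ?thesis unfolding gram_def by blast
qed

definition "eo a = (\<Sum>i\<in>UNIV. gram a i * mink e (x i))"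
definition "Bh b i = (\<Sum>l\<in>UNIV. gram b l * B i l)"
definition "Bo a b = (\<Sum>i\<in>UNIV. gram a i * Bh b i)"
definition "Boe a = (\<Sum>b\<in>UNIV. Bo a b * eo b)"
definition "NYo a = (\<Sum>i\<in>UNIV. gram a i *\<^sub>R NY i)"

lemma tan_sq_frame: "tan_sq = (\<Sum>a\<in>UNIV. (eo a)\<^sup>2)"
  unfolding tan_sq_def gi_gram
  using sum_gram_form[where p=gram and F="\<lambda>i. mink e (x i)" and G="\<lambda>i. mink e (x i)" and I=UNIV and
      J=UNIV and K=UNIV]
  by (simp add: eo_def power2_eq_square)

lemma xi0_frame: "xi0 j = - (\<Sum>a\<in>UNIV. gram a j * eo a)"
proof -
  have "(\<Sum>l\<in>UNIV. gi j l * mink e (x l)) = (\<Sum>a\<in>UNIV. gram a j * eo a)"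
    unfolding gi_gram eo_def by (simp add: sum_distrib_right sum_distrib_left mult_ac) (rule sum.swap)
  then show ?thesis by (simp add: xi0_def)
qed

lemma Bxi_frame: "Bxi i = - (\<Sum>b\<in>UNIV. eo b * Bh b i)"
proof -
  have "Bxi i = - (\<Sum>l\<in>UNIV. \<Sum>b\<in>UNIV. gram b l * eo b * B i l)"
    by (simp add: Bxi_def xi0_frame sum_distrib_right sum_distrib_left sum_negf mult_ac)
  also have "\<dots> = - (\<Sum>b\<in>UNIV. eo b * Bh b i)"
    by (subst sum.swap) (simp add: Bh_def sum_distrib_left mult_ac)
  finally show ?thesis .
qed

lemma B_xi_xi_frame: "B_xi_xi = (\<Sum>a\<in>UNIV. eo a * Boe a)"
proof -
  have "B_xi_xi = (\<Sum>j\<in>UNIV. \<Sum>a\<in>UNIV. \<Sum>b\<in>UNIV. eo a * (eo b * (gram a j * Bh b j)))"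
    by (simp add: B_xi_xi_def xi0_frame Bxi_frame sum_product mult_ac)
  also have "\<dots> = (\<Sum>a\<in>UNIV. \<Sum>b\<in>UNIV. \<Sum>j\<in>UNIV. eo a * (eo b * (gram a j * Bh b j)))"
    by (rule sum_rotate3[symmetric])
  also have "\<dots> = (\<Sum>a\<in>UNIV. eo a * Boe a)"
    by (simp add: Boe_def Bo_def sum_distrib_left mult_ac)
  finally show ?thesis .
qed

lemma Bsq_frame: "Bsq = (\<Sum>a\<in>UNIV. \<Sum>b\<in>UNIV. (Bo a b)\<^sup>2)"
proof -
  have Bup_Bh: "(\<Sum>l\<in>UNIV. B i l * Bup j l) = (\<Sum>b\<in>UNIV. Bh b i * Bh b j)" for i j
  proof -
    have "(\<Sum>l\<in>UNIV. B i l * Bup j l) = (\<Sum>l\<in>UNIV. \<Sum>q\<in>UNIV. gi l q * B i l * B j q)"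
      by (simp add: Bup_def sum_distrib_left mult_ac)
    also have "\<dots> = (\<Sum>b\<in>UNIV. Bh b i * Bh b j)"
      unfolding gi_gram
      using sum_gram_form[where p=gram and F="\<lambda>l. B i l" and G="\<lambda>q. B j q" and I=UNIV and J=UNIV and
          K=UNIV]
      by (simp add: Bh_def)
    finally show ?thesis .
  qed
  have "Bsq = (\<Sum>i\<in>UNIV. \<Sum>j\<in>UNIV. \<Sum>b\<in>UNIV. gi i j * Bh b i * Bh b j)"
    by (simp add: Bsq_def Bup_Bh sum_distrib_left mult_ac)
  also have "\<dots> = (\<Sum>b\<in>UNIV. \<Sum>i\<in>UNIV. \<Sum>j\<in>UNIV. gi i j * Bh b i * Bh b j)" by (rule sum_rotate3)
  also have "\<dots> = (\<Sum>b\<in>UNIV. \<Sum>a\<in>UNIV. (Bo a b)\<^sup>2)"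
  proof (rule sum.cong[OF refl])
    fix b
    show "(\<Sum>i\<in>UNIV. \<Sum>j\<in>UNIV. gi i j * Bh b i * Bh b j) = (\<Sum>a\<in>UNIV. (Bo a b)\<^sup>2)"
      unfolding gi_gram
      using sum_gram_form[where p=gram and F="Bh b" and G="Bh b" and I=UNIV and J=UNIV and K=UNIV]
      by (simp add: Bo_def power2_eq_square)
  qed
  also have "\<dots> = (\<Sum>a\<in>UNIV. \<Sum>b\<in>UNIV. (Bo a b)\<^sup>2)" by (rule sum.swap)
  finally show ?thesis .
qed

lemma NY_sq_frame: "NY_sq = (\<Sum>a\<in>UNIV. mink (NYo a) (NYo a))"
  unfolding NY_sq_def gi_gram NYo_def by (rule sum_gram_form_mink)

lemma mink_NYo_x: "mink (NYo a) (x k) = 0"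
  by (simp add: NYo_def mink_sum_left mink_scaleR_left NY_perp)

lemma mink_N_NYo: "mink N (NYo a) = - Boe a"
proof -
  have "mink N (NYo a) = (\<Sum>i\<in>UNIV. gram a i * Bxi i)"
    by (simp add: NYo_def mink_sum_right mink_scaleR_right mink_N_NY)
  also have "\<dots> = - (\<Sum>i\<in>UNIV. \<Sum>b\<in>UNIV. eo b * (gram a i * Bh b i))"
    by (simp add: Bxi_frame sum_distrib_left sum_negf mult_ac)
  also have "\<dots> = - Boe a"
    by (subst sum.swap) (simp add: Boe_def Bo_def sum_distrib_left mult_ac)
  finally show ?thesis .
qed

lemma cross_term_bound:
  "8 * u z * B_xi_xi \<le> 2 * (- NY_sq) + 2 * Bsq + 4 * (u z)\<^sup>2 * wsq X A z * tan_sq"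
proof (rule quadratic_cross_bound[where K="\<Sum>a\<in>UNIV. (Boe a)\<^sup>2"])
  let ?K = "\<Sum>a\<in>UNIV. (Boe a)\<^sup>2"
  show "tan_sq \<ge> 0" "?K \<ge> 0" "Bsq \<ge> 0" by (simp_all add: tan_sq_frame Bsq_frame sum_nonneg)
  show "- NY_sq \<ge> 0"
    using mink_normal_nonpos[OF spacelike_z mink_NYo_x[unfolded x_def]]
    by (simp add: NY_sq_frame sum_nonpos)
  show "B_xi_xi\<^sup>2 \<le> tan_sq * ?K"
    unfolding B_xi_xi_frame tan_sq_frame by (rule Cauchy_Schwarz_ineq_sum)
  have "(Boe a)\<^sup>2 \<le> (\<Sum>b\<in>UNIV. (Bo a b)\<^sup>2) * tan_sq" for a
    unfolding Boe_def tan_sq_frame by (rule Cauchy_Schwarz_ineq_sum)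
  then have "?K \<le> (\<Sum>a\<in>UNIV. tan_sq * (\<Sum>b\<in>UNIV. (Bo a b)\<^sup>2))"
    by (intro sum_mono) (simp add: mult.commute)
  then show "?K \<le> tan_sq * Bsq" by (simp add: Bsq_frame sum_distrib_left)
  have "(Boe a)\<^sup>2 \<le> wsq X A z * (- mink (NYo a) (NYo a))" for a
    using mink_normal_sq_le[OF mink_NYo_x, of a] mink_N_NYo[of a] wsq_z by (simp add: mult.commute)
  then have "?K \<le> (\<Sum>a\<in>UNIV. wsq X A z * (- mink (NYo a) (NYo a)))" by (rule sum_mono)
  then show "?K \<le> wsq X A z * (- NY_sq)" by (simp add: NY_sq_frame sum_distrib_left sum_negf)
qed (rule wsq_z_eq)

lemma heat_op_f_bound: "ddt f z - lapl X f z \<le> - 2 * exp ((u z)\<^sup>2) * wsq X A z * (wsq X A z - 1)"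
proof -
  have "ddt f z - lapl X f z \<le> ddt psi z - lapl X psi z" by (rule heat_op_f_le_psi)
  also have "\<dots> \<le> exp ((u z)\<^sup>2) * (- 2 * wsq X A z * tan_sq)"
    unfolding heat_op_psi_z using cross_term_bound
    by (intro mult_left_mono) (simp_all add: algebra_simps)
  also have "\<dots> = - 2 * exp ((u z)\<^sup>2) * wsq X A z * (wsq X A z - 1)"
    by (simp add: wsq_z_eq algebra_simps)
  finally show ?thesis .
qed

end

theorem lemma3p8:
  fixes X :: "'n::finite par \<Rightarrow> ('n, 'm::finite) amb"
    and I :: "real set" and U :: "(real^'n) set" and A :: 'm
  assumes "open I" and "open U"
    and "smooth_on (I \<times> U) X"
    and "\<forall>z\<in>I \<times> U. spacelike_at X z"
    and "\<forall>z\<in>I \<times> U. ddt X z = mcv X z"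
  shows "\<forall>z\<in>I \<times> U.
           ddt (\<lambda>y. wsq X A y * exp ((uA X A y)\<^sup>2)) z
           - lapl X (\<lambda>y. wsq X A y * exp ((uA X A y)\<^sup>2)) z
         \<le> - 2 * exp ((uA X A z)\<^sup>2) * wsq X A z * (wsq X A z - 1)"
proof
  fix z assume z: "z \<in> I \<times> U"
  interpret Z: mcf_barrier X "I \<times> U" z A
    by unfold_locales (use assms z in auto)
  have fe: "(\<lambda>y. wsq X A y * exp ((uA X A y)\<^sup>2)) = Z.f"
    by (simp add: Z.f_def[abs_def] Z.u_def[abs_def])
  show "ddt (\<lambda>y. wsq X A y * exp ((uA X A y)\<^sup>2)) z
           - lapl X (\<lambda>y. wsq X A y * exp ((uA X A y)\<^sup>2)) z
         \<le> - 2 * exp ((uA X A z)\<^sup>2) * wsq X A z * (wsq X A z - 1)"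
    unfolding fe using Z.heat_op_f_bound by (simp add: Z.u_def)
qed

end
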